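(* Suppose $d\ge2$, $D\ge101$ and $T\ge45(d-1)^2D$. Then for any algorithm $\mathfrak A$ there exists an MDP $M_\theta$ of the family below (with $\delta=1/D$) such that $L_\theta\le100/99$, $L_\varphi\le1+\log(D-1)$, and $\mathbb E[\mathrm{Regret}(M_\theta,\mathfrak A,x_0,T)]\ge\frac1{2025}d\sqrt{DT}$, where the expectation is over the randomness of $M_\theta$ and $\mathfrak A$.
   Context: Family $M_\theta$: two states $x_0,x_1$; actions $\mathcal A=\{-1,1\}^{d-1}$; rewards $r(x_0,a)=0$, $r(x_1,a)=1$. Parameters: $\delta=1/D$, $\Delta=(d-1)/(45\sqrt{(2/5)(T/\delta)\log2})$, $\bar\Delta=\log\frac{(1-\delta)(\delta+\Delta)}{\delta(1-\delta-\Delta)}$, $\alpha=\sqrt{\bar\Delta/((d-1)(1+\bar\Delta))}$, $\beta=\sqrt{1/(1+\bar\Delta)}$. Features: $\varphi(x_0,a,x_0)=(-\alpha a,\beta\log(\delta^{-1}-1))$, $\varphi(x_0,a,x_1)=\varphi(x_1,a,x_0)=(0,0)$, $\varphi(x_1,a,x_1)=(0,\beta\log(\delta^{-1}-1))$ in $\mathbb R^{d-1}\times\mathbb R$. For $\theta\in\{-\bar\Delta/(d-1),\bar\Delta/(d-1)\}^{d-1}$ the transition core is $\bar\theta=(\theta/\alpha,1/\beta)$ and $p(x_j\mid x_i,a)=\exp(\varphi(x_i,a,x_j)^\top\bar\theta)/\sum_{j'\in\{0,1\}}\exp(\varphi(x_i,a,x_{j'})^\top\bar\theta)$; thus $p(x_1\mid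 x_0,a)=1/(1+(\delta^{-1}-1)e^{-a^\top\theta})$ and $p(x_0\mid x_1,a)=\delta$. $L_\theta=\|\bar\theta\|_2$, $L_\varphi=\max\|\varphi\|_2$. With $s_1=x_0$ and $J^*(M_\theta)$ the optimal average reward, $\mathrm{Regret}(M_\theta,\mathfrak A,x_0,T)=TJ^*(M_\theta)-\sum_{t=1}^Tr(s_t,a_t)$. *)

theory Defs
  imports "HOL-Probability.Probability"
begin

text \<open>States: x0 is encoded as 0, x1 as 1. Actions: lists of length d-1 with entries in {-1,1}.
  Vectors of R^(d-1) x R are lists of length d (last entry = the extra coordinate).\<close>

type_synonym action = "real list"
type_synonym hist = "(nat \<times> action) list"
type_synonym algorithm = "hist \<Rightarrow> nat \<Rightarrow> action pmf"

definition actions :: "nat \<Rightarrow> action set" where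
  "actions d = {a. length a = d - 1 \<and> set a \<subseteq> {-1, 1}}"

definition states :: "nat set" where "states = {0, 1}"

definition reward :: "nat \<Rightarrow> action \<Rightarrow> real" where
  "reward s a = (if s = 1 then 1 else 0)"

definition ip :: "real list \<Rightarrow> real list \<Rightarrow> real" where
  "ip u v = sum_list (map2 (*) u v)"

definition vnorm :: "real list \<Rightarrow> real" where
  "vnorm v = sqrt (sum_list (map (\<lambda>x. x ^ 2) v))"

definition delta :: "real \<Rightarrow> real" where "delta D = 1 / D"

definition Delta :: "nat \<Rightarrow> real \<Rightarrow> nat \<Rightarrow> real" where
  "Delta d D T = real (d - 1) / (45 * sqrt ((2/5) * (real T / delta D) * ln 2))"

definition Deltabar :: "nat \<Rightarrow> real \<Rightarrow> nat \<Rightarrow> real" where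
  "Deltabar d D T = ln (((1 - delta D) * (delta D + Delta d D T)) /
                        (delta D * (1 - delta D - Delta d D T)))"

definition alpha :: "nat \<Rightarrow> real \<Rightarrow> nat \<Rightarrow> real" where
  "alpha d D T = sqrt (Deltabar d D T / (real (d - 1) * (1 + Deltabar d D T)))"

definition beta :: "nat \<Rightarrow> real \<Rightarrow> nat \<Rightarrow> real" where
  "beta d D T = sqrt (1 / (1 + Deltabar d D T))"

definition phi :: "nat \<Rightarrow> real \<Rightarrow> nat \<Rightarrow> nat \<Rightarrow> action \<Rightarrow> nat \<Rightarrow> real list" where
  "phi d D T s a s' =
     (if s = 0 \<and> s' = 0 then map (\<lambda>x. - alpha d D T * x) a @ [beta d D T * ln (1 / delta D - 1)]
      else if s = 1 \<and> s' = 1 then replicate (d - 1) 0 @ [beta d D T * ln (1 / delta D - 1)]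
      else replicate (d - 1) 0 @ [0])"

definition Thetas :: "nat \<Rightarrow> real \<Rightarrow> nat \<Rightarrow> real list set" where
  "Thetas d D T = {\<theta>. length \<theta> = d - 1 \<and>
      set \<theta> \<subseteq> {- Deltabar d D T / real (d - 1), Deltabar d D T / real (d - 1)}}"

definition thetabar :: "nat \<Rightarrow> real \<Rightarrow> nat \<Rightarrow> real list \<Rightarrow> real list" where
  "thetabar d D T \<theta> = map (\<lambda>x. x / alpha d D T) \<theta> @ [1 / beta d D T]"

definition L_theta :: "nat \<Rightarrow> real \<Rightarrow> nat \<Rightarrow> real list \<Rightarrow> real" where
  "L_theta d D T \<theta> = vnorm (thetabar d D T \<theta>)"

definition L_phi :: "nat \<Rightarrow> real \<Rightarrow> nat \<Rightarrow> real" where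
  "L_phi d D T = Max {vnorm (phi d D T s a s') | s a s'.
                        s \<in> states \<and> a \<in> actions d \<and> s' \<in> states}"

definition p1 :: "nat \<Rightarrow> real \<Rightarrow> nat \<Rightarrow> real list \<Rightarrow> nat \<Rightarrow> action \<Rightarrow> real" where
  "p1 d D T \<theta> s a =
     exp (ip (phi d D T s a 1) (thetabar d D T \<theta>)) /
     (exp (ip (phi d D T s a 0) (thetabar d D T \<theta>)) + exp (ip (phi d D T s a 1) (thetabar d D T \<theta>)))"

definition trans :: "nat \<Rightarrow> real \<Rightarrow> nat \<Rightarrow> real list \<Rightarrow> nat \<Rightarrow> action \<Rightarrow> nat pmf" where
  "trans d D T \<theta> s a = map_pmf (\<lambda>b. if b then 1 else 0) (bernoulli_pmf (p1 d D T \<theta> s a))"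

text \<open>Distribution of (history of (s_t,a_t) for t=1..n, s_{n+1}) when running algorithm A
  in the MDP with transition kernel P, starting at s_1 = x0.\<close>
fun traj :: "(nat \<Rightarrow> action \<Rightarrow> nat pmf) \<Rightarrow> algorithm \<Rightarrow> nat \<Rightarrow> (hist \<times> nat) pmf" where
  "traj P A 0 = return_pmf ([], 0)"
| "traj P A (Suc t) = bind_pmf (traj P A t) (\<lambda>(h, s).
      bind_pmf (A h s) (\<lambda>a. bind_pmf (P s a) (\<lambda>s'. return_pmf (h @ [(s, a)], s'))))"

definition total_reward :: "hist \<Rightarrow> real" where
  "total_reward h = sum_list (map (\<lambda>(s, a). reward s a) h)"

definition expected_total_reward :: "(nat \<Rightarrow> action \<Rightarrow> nat pmf) \<Rightarrow> algorithm \<Rightarrow> nat \<Rightarrow> real" where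
  "expected_total_reward P A n = measure_pmf.expectation (traj P A n) (\<lambda>(h, s). total_reward h)"

definition valid_alg :: "nat \<Rightarrow> algorithm \<Rightarrow> bool" where
  "valid_alg d A \<longleftrightarrow> (\<forall>h s. set_pmf (A h s) \<subseteq> actions d)"

definition Jstar :: "nat \<Rightarrow> (nat \<Rightarrow> action \<Rightarrow> nat pmf) \<Rightarrow> real" where
  "Jstar d P = real_of_ereal (SUP \<pi>\<in>{\<pi>. valid_alg d \<pi>}.
      limsup (\<lambda>n. ereal (expected_total_reward P \<pi> n / real n)))"

definition expected_regret :: "nat \<Rightarrow> (nat \<Rightarrow> action \<Rightarrow> nat pmf) \<Rightarrow> algorithm \<Rightarrow> nat \<Rightarrow> real" where
  "expected_regret d P A T = real T * Jstar d P - expected_total_reward P A T"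

end

theory Submission
  imports Defs
begin

text \<open>The hard instances are indexed by sign vectors \<open>\<sigma> \<in> {-1, 1}\<^sup>d\<^sup>-\<^sup>1\<close>, with \<open>\<theta> = \<epsilon> \<sigma>\<close>.
  From \<open>x\<^sub>0\<close> the chain moves to \<open>x\<^sub>1\<close> with probability \<open>logistic (\<epsilon> \<langle>a, \<sigma>\<rangle>)\<close>, which is largest
  for \<open>a = \<sigma>\<close>; each coordinate in which the action disagrees with \<open>\<sigma>\<close> lowers it by at least
  \<open>2 \<kappa> \<epsilon>\<close>. A potential argument with the bias \<open>g\<close> of the optimal policy turns this into
  regret \<open>\<ge> 2 g \<kappa> \<epsilon> \<Sum>\<^sub>i E[N\<^sub>i]\<close>, where \<open>N\<^sub>i\<close> counts the visits to \<open>x\<^sub>0\<close> whose action has a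
  wrong \<open>i\<close>-th sign. Flipping \<open>\<sigma>\<^sub>i\<close> changes each transition by chi-square divergence at
  most \<open>\<chi>\<^sup>2\<close>, so \<open>E[N\<^sub>i]\<close> moves by at most \<open>T \<tau>\<close> with \<open>\<tau> = \<surd>((1 + \<chi>\<^sup>2)\<^sup>T - 1)\<close>; as the counts
  for \<open>\<sigma>\<close> and for its flip add up to the visits to \<open>x\<^sub>0\<close>, at least \<open>T \<pi>\<^sub>0\<close> in expectation, the pair
  sums to at least \<open>T (\<pi>\<^sub>0 - \<tau>)\<close>. Averaging over all \<open>\<sigma>\<close> yields an instance with
  \<open>\<Sum>\<^sub>i E[N\<^sub>i] \<ge> (d - 1) T (\<pi>\<^sub>0 - \<tau>) / 2\<close>, and the choice of \<open>\<Delta>\<close> makes the resulting bound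
  of order \<open>d \<surd>(D T)\<close>.\<close>

section \<open>Expectations over finitely supported distributions\<close>

lemma expectation_bind_pmf_finite:
  fixes h :: "'b \<Rightarrow> real"
  assumes "finite (set_pmf p)" "\<And>x. x \<in> set_pmf p \<Longrightarrow> finite (set_pmf (f x))"
  shows "measure_pmf.expectation (bind_pmf p f) h =
         measure_pmf.expectation p (\<lambda>x. measure_pmf.expectation (f x) h)"
proof -
  have "measure_pmf.expectation (bind_pmf p f) h =
      (\<Sum>x\<in>set_pmf p. pmf p x *\<^sub>R measure_pmf.expectation (f x) h)"
    using assms by (intro pmf_expectation_bind) auto
  also have "\<dots> = measure_pmf.expectation p (\<lambda>x. measure_pmf.expectation (f x) h)"
    using assms by (subst integral_measure_pmf[of "set_pmf p"]) auto
  finally show ?thesis .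
qed

lemma expectation_mono_finite_pmf:
  fixes f g :: "'a \<Rightarrow> real"
  assumes "finite (set_pmf M)" "\<And>x. x \<in> set_pmf M \<Longrightarrow> f x \<le> g x"
  shows "measure_pmf.expectation M f \<le> measure_pmf.expectation M g"
  using assms
  by (intro integral_mono_AE) (auto simp: integrable_measure_pmf_finite AE_measure_pmf_iff)

lemma expectation_const_pmf [simp]: "measure_pmf.expectation M (\<lambda>x. c :: real) = c"
  by (simp add: measure_pmf.prob_space)

lemma expectation_abs_le_sqrt_second_moment:
  fixes f :: "'a \<Rightarrow> real"
  assumes "finite (set_pmf M)"
  shows "measure_pmf.expectation M (\<lambda>x. \<bar>f x\<bar>) \<le> sqrt (measure_pmf.expectation M (\<lambda>x. (f x)\<^sup>2))"
proof -
  have "(measure_pmf.expectation M (\<lambda>x. \<bar>f x\<bar>))\<^sup>2 \<le> measure_pmf.expectation M (\<lambda>x. (f x)\<^sup>2)"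
    using measure_pmf.variance_positive[of M "\<lambda>x. \<bar>f x\<bar>"]
    by (subst (asm) measure_pmf.variance_eq) (simp_all add: integrable_measure_pmf_finite[OF assms])
  then show ?thesis
    using real_le_rsqrt by (simp add: integral_nonneg_AE)
qed

lemma expectation_reweight_deviation:
  fixes f L :: "'a \<Rightarrow> real"
  assumes fin: "finite (set_pmf M)" and mean_L: "measure_pmf.expectation M L = 1"
    and bounded: "\<And>x. x \<in> set_pmf M \<Longrightarrow> \<bar>f x\<bar> \<le> B"
  shows "\<bar>measure_pmf.expectation M (\<lambda>x. f x * L x) - measure_pmf.expectation M f\<bar>
           \<le> B * sqrt (measure_pmf.expectation M (\<lambda>x. (L x)\<^sup>2) - 1)"
proof -
  note int = integrable_measure_pmf_finite[OF fin]
  obtain x0 where "x0 \<in> set_pmf M"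
    using set_pmf_not_empty[of M] by blast
  then have B_nonneg: "0 \<le> B"
    using bounded by force
  have "\<bar>measure_pmf.expectation M (\<lambda>x. f x * L x) - measure_pmf.expectation M f\<bar>
      = \<bar>measure_pmf.expectation M (\<lambda>x. f x * (L x - 1))\<bar>"
    by (simp add: int algebra_simps)
  also have "\<dots> \<le> measure_pmf.expectation M (\<lambda>x. \<bar>f x\<bar> * \<bar>L x - 1\<bar>)"
    using integral_abs_bound[of M "\<lambda>x. f x * (L x - 1)"] by (simp only: abs_mult)
  also have "\<dots> \<le> measure_pmf.expectation M (\<lambda>x. B * \<bar>L x - 1\<bar>)"
    using fin bounded by (intro expectation_mono_finite_pmf mult_right_mono) auto
  also have "\<dots> \<le> B * sqrt (measure_pmf.expectation M (\<lambda>x. (L x - 1)\<^sup>2))"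
    using expectation_abs_le_sqrt_second_moment[OF fin] B_nonneg by (simp add: mult_left_mono)
  also have "measure_pmf.expectation M (\<lambda>x. (L x - 1)\<^sup>2) = measure_pmf.expectation M (\<lambda>x. (L x)\<^sup>2) - 1"
    using mean_L by (simp add: power2_diff int measure_pmf.prob_space)
  finally show ?thesis .
qed

section \<open>Trajectories of an algorithm\<close>

lemma finite_set_pmf_traj:
  assumes "\<And>h s. finite (set_pmf (A h s))" "\<And>s a. finite (set_pmf (P s a))"
  shows "finite (set_pmf (traj P A n))"
  by (induction n) (auto simp: assms)

lemma expectation_traj_Suc:
  fixes F :: "hist \<times> nat \<Rightarrow> real"
  assumes fin_A: "\<And>h s. finite (set_pmf (A h s))" and fin_P: "\<And>s a. finite (set_pmf (P s a))"
  shows "measure_pmf.expectation (traj P A (Suc n)) F =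
    measure_pmf.expectation (traj P A n) (\<lambda>(h, s). measure_pmf.expectation (A h s)
       (\<lambda>a. measure_pmf.expectation (P s a) (\<lambda>s'. F (h @ [(s, a)], s'))))"
proof -
  have "measure_pmf.expectation (A h s \<bind> (\<lambda>a. P s a \<bind> (\<lambda>s'. return_pmf (h @ [(s, a)], s')))) F
      = measure_pmf.expectation (A h s)
          (\<lambda>a. measure_pmf.expectation (P s a) (\<lambda>s'. F (h @ [(s, a)], s')))" for h s
    by (simp add: expectation_bind_pmf_finite assms)
  then show ?thesis
    by (simp add: expectation_bind_pmf_finite finite_set_pmf_traj assms case_prod_unfold)
qed

lemma expectation_traj_potential_ge:
  fixes \<Phi> :: "hist \<times> nat \<Rightarrow> real"
  assumes fin_A: "\<And>h s. finite (set_pmf (A h s))" and fin_P: "\<And>s a. finite (set_pmf (P s a))"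
    and step: "\<And>n h s. (h, s) \<in> set_pmf (traj P A n) \<Longrightarrow>
      \<Phi> (h, s) + c \<le> measure_pmf.expectation (A h s)
        (\<lambda>a. measure_pmf.expectation (P s a) (\<lambda>s'. \<Phi> (h @ [(s, a)], s')))"
  shows "\<Phi> ([], 0) + real n * c \<le> measure_pmf.expectation (traj P A n) \<Phi>"
proof (induction n)
  case (Suc n)
  note fin_traj = finite_set_pmf_traj[OF fin_A fin_P]
  have "\<Phi> ([], 0) + real (Suc n) * c \<le> measure_pmf.expectation (traj P A n) (\<lambda>x. \<Phi> x + c)"
    using Suc by (simp add: integrable_measure_pmf_finite[OF fin_traj] algebra_simps)
  also have "\<dots> \<le> measure_pmf.expectation (traj P A (Suc n)) \<Phi>"
    unfolding expectation_traj_Suc[OF fin_A fin_P]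
    by (intro expectation_mono_finite_pmf[OF fin_traj]) (auto intro: step)
  finally show ?case .
qed simp

text \<open>The likelihood ratio of a trajectory is the product of the one-step ratios
  \<open>r s\<^sub>t a\<^sub>t s\<^sub>t\<^sub>+\<^sub>1\<close>; histories are stored oldest step first, hence the recursion over the
  reversed history.\<close>

fun likelihood_ratio_rev :: "(nat \<Rightarrow> action \<Rightarrow> nat \<Rightarrow> real) \<Rightarrow> hist \<Rightarrow> nat \<Rightarrow> real" where
  "likelihood_ratio_rev r [] s = 1"
| "likelihood_ratio_rev r ((s0, a) # h) s = r s0 a s * likelihood_ratio_rev r h s0"

definition likelihood_ratio :: "(nat \<Rightarrow> action \<Rightarrow> nat \<Rightarrow> real) \<Rightarrow> hist \<times> nat \<Rightarrow> real" where
  "likelihood_ratio r x = likelihood_ratio_rev r (rev (fst x)) (snd x)"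

lemma likelihood_ratio_Nil [simp]: "likelihood_ratio r ([], s) = 1"
  by (simp add: likelihood_ratio_def)

lemma likelihood_ratio_snoc [simp]:
  "likelihood_ratio r (h @ [(s0, a)], s) = r s0 a s * likelihood_ratio r (h, s0)"
  by (simp add: likelihood_ratio_def)

lemma expectation_traj_change_kernel:
  fixes f :: "hist \<times> nat \<Rightarrow> real"
  assumes fin_A: "\<And>h s. finite (set_pmf (A h s))" and fin_P: "\<And>s a. finite (set_pmf (P s a))"
    and fin_P': "\<And>s a. finite (set_pmf (P' s a))"
    and density: "\<And>s a (\<phi> :: nat \<Rightarrow> real). measure_pmf.expectation (P' s a) \<phi> =
               measure_pmf.expectation (P s a) (\<lambda>s'. \<phi> s' * r s a s')"
  shows "measure_pmf.expectation (traj P' A n) f =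
         measure_pmf.expectation (traj P A n) (\<lambda>x. f x * likelihood_ratio r x)"
proof (induction n arbitrary: f)
  case (Suc n)
  have step: "measure_pmf.expectation (A h s)
          (\<lambda>a. measure_pmf.expectation (P' s a) (\<lambda>s'. f (h @ [(s, a)], s'))) * likelihood_ratio r (h, s)
      = measure_pmf.expectation (A h s) (\<lambda>a. measure_pmf.expectation (P s a)
          (\<lambda>s'. f (h @ [(s, a)], s') * likelihood_ratio r (h @ [(s, a)], s')))" for h s
  proof -
    have "measure_pmf.expectation (P' s a) (\<lambda>s'. f (h @ [(s, a)], s')) * likelihood_ratio r (h, s)
        = measure_pmf.expectation (P s a)
            (\<lambda>s'. f (h @ [(s, a)], s') * likelihood_ratio r (h @ [(s, a)], s'))" for a
      unfolding density by (simp add: mult_ac flip: integral_mult_right_zero)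
    then show ?thesis
      by (simp flip: integral_mult_left_zero)
  qed
  show ?case
    unfolding expectation_traj_Suc[OF fin_A fin_P'] expectation_traj_Suc[OF fin_A fin_P] Suc
    by (intro Bochner_Integration.integral_cong refl) (auto simp: step split: prod.splits)
qed simp

lemma finite_actions: "finite (actions d)"
proof -
  have "actions d = {xs. set xs \<subseteq> {-1, 1} \<and> length xs = d - 1}"
    unfolding actions_def by auto
  then show ?thesis
    using finite_lists_length_eq[of "{-1, 1::real}" "d - 1"] by simp
qed

lemma replicate_one_in_actions: "replicate (d - 1) 1 \<in> actions d"
  unfolding actions_def by (auto simp: in_set_replicate)

lemma finite_set_pmf_valid_alg: "valid_alg d A \<Longrightarrow> finite (set_pmf (A h s))"
  using finite_actions[of d] unfolding valid_alg_def by (meson finite_subset)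

lemma finite_set_pmf_binary: "set_pmf p \<subseteq> {0, 1 :: nat} \<Longrightarrow> finite (set_pmf p)"
  by (rule finite_subset) auto

lemma finite_set_pmf_traj_valid:
  assumes "valid_alg d A" "\<And>s a. set_pmf (P s a) \<subseteq> {0, 1}"
  shows "finite (set_pmf (traj P A n))"
  using assms by (intro finite_set_pmf_traj finite_set_pmf_valid_alg finite_set_pmf_binary)

lemma set_pmf_trajD:
  assumes valid: "valid_alg d A" and binary: "\<And>s a. set_pmf (P s a) \<subseteq> {0, 1}"
    and "(h, s) \<in> set_pmf (traj P A n)"
  shows "length h = n" "s \<in> {0, 1}" "\<forall>x\<in>set h. snd x \<in> actions d"
proof -
  have "length h = n \<and> s \<in> {0, 1} \<and> (\<forall>x\<in>set h. snd x \<in> actions d)"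
    using assms(3)
  proof (induction n arbitrary: h s)
    case (Suc n)
    then show ?case using valid binary unfolding valid_alg_def by fastforce
  qed simp
  then show "length h = n" "s \<in> {0, 1}" "\<forall>x\<in>set h. snd x \<in> actions d"
    by blast+
qed

lemma expectation_traj_potential_ge_valid:
  fixes \<Phi> :: "hist \<times> nat \<Rightarrow> real"
  assumes valid: "valid_alg d A" and binary: "\<And>s a. set_pmf (P s a) \<subseteq> {0, 1}"
    and step: "\<And>h s a. s \<in> {0, 1} \<Longrightarrow> a \<in> actions d \<Longrightarrow>
      \<Phi> (h, s) + c \<le> measure_pmf.expectation (P s a) (\<lambda>s'. \<Phi> (h @ [(s, a)], s'))"
  shows "\<Phi> ([], 0) + real n * c \<le> measure_pmf.expectation (traj P A n) \<Phi>"
proof (rule expectation_traj_potential_ge)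
  fix n h s
  assume "(h, s) \<in> set_pmf (traj P A n)"
  then have "s \<in> {0, 1}"
    by (rule set_pmf_trajD[OF valid binary])
  have "\<Phi> (h, s) + c = measure_pmf.expectation (A h s) (\<lambda>a. \<Phi> (h, s) + c)"
    by simp
  also have "\<dots> \<le> measure_pmf.expectation (A h s)
      (\<lambda>a. measure_pmf.expectation (P s a) (\<lambda>s'. \<Phi> (h @ [(s, a)], s')))"
    using valid step[OF \<open>s \<in> {0, 1}\<close>] unfolding valid_alg_def
    by (intro expectation_mono_finite_pmf finite_set_pmf_valid_alg[OF valid]) blast
  finally show "\<Phi> (h, s) + c \<le> \<dots>" .
qed (simp_all add: finite_set_pmf_valid_alg[OF valid] finite_set_pmf_binary[OF binary])

lemma expectation_likelihood_ratio_sq_le: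
  fixes r :: "nat \<Rightarrow> action \<Rightarrow> nat \<Rightarrow> real"
  assumes valid: "valid_alg d A" and binary: "\<And>s a. set_pmf (P s a) \<subseteq> {0, 1}"
    and C: "\<And>s a. s \<in> {0, 1} \<Longrightarrow> a \<in> actions d \<Longrightarrow>
              measure_pmf.expectation (P s a) (\<lambda>s'. (r s a s')\<^sup>2) \<le> C"
  shows "measure_pmf.expectation (traj P A n) (\<lambda>x. (likelihood_ratio r x)\<^sup>2) \<le> C ^ n"
proof (induction n)
  case (Suc n)
  note fin_A = finite_set_pmf_valid_alg[OF valid] and fin_P = finite_set_pmf_binary[OF binary]
  have "0 \<le> measure_pmf.expectation (P 0 (replicate (d - 1) 1)) (\<lambda>s'. (r 0 (replicate (d - 1) 1) s')\<^sup>2)"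
    by (simp add: integral_nonneg_AE)
  moreover have "measure_pmf.expectation (P 0 (replicate (d - 1) 1)) (\<lambda>s'. (r 0 (replicate (d - 1) 1) s')\<^sup>2) \<le> C"
    using replicate_one_in_actions by (intro C) auto
  ultimately have C_nonneg: "0 \<le> C"
    by linarith
  have "measure_pmf.expectation (traj P A (Suc n)) (\<lambda>x. (likelihood_ratio r x)\<^sup>2)
      = measure_pmf.expectation (traj P A n) (\<lambda>(h, s). measure_pmf.expectation (A h s)
          (\<lambda>a. measure_pmf.expectation (P s a) (\<lambda>s'. (r s a s')\<^sup>2)) * (likelihood_ratio r (h, s))\<^sup>2)"
    unfolding expectation_traj_Suc[OF fin_A fin_P]
    by (simp add: power_mult_distrib case_prod_unfold)
  also have "\<dots> \<le> measure_pmf.expectation (traj P A n) (\<lambda>x. C * (likelihood_ratio r x)\<^sup>2)"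
  proof (intro expectation_mono_finite_pmf finite_set_pmf_traj fin_A fin_P, clarify)
    fix h s
    assume "(h, s) \<in> set_pmf (traj P A n)"
    then have "s \<in> {0, 1}"
      by (rule set_pmf_trajD[OF valid binary])
    then have "measure_pmf.expectation (A h s) (\<lambda>a. measure_pmf.expectation (P s a) (\<lambda>s'. (r s a s')\<^sup>2))
        \<le> measure_pmf.expectation (A h s) (\<lambda>a. C)"
      using valid C[OF \<open>s \<in> {0, 1}\<close>] unfolding valid_alg_def
      by (intro expectation_mono_finite_pmf fin_A) blast
    then show "measure_pmf.expectation (A h s) (\<lambda>a. measure_pmf.expectation (P s a) (\<lambda>s'. (r s a s')\<^sup>2))
        * (likelihood_ratio r (h, s))\<^sup>2 \<le> C * (likelihood_ratio r (h, s))\<^sup>2"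
      by (simp add: mult_right_mono)
  qed
  also have "\<dots> \<le> C * C ^ n"
    using Suc C_nonneg by (simp add: mult_left_mono)
  finally show ?case
    by simp
qed simp

lemma total_reward_snoc [simp]: "total_reward (h @ [(s, a)]) = total_reward h + reward s a"
  by (simp add: total_reward_def)

lemma total_reward_Nil [simp]: "total_reward [] = 0"
  by (simp add: total_reward_def)

lemma total_reward_le_length: "total_reward h \<le> real (length h)"
  unfolding total_reward_def reward_def by (induction h) auto

lemma expected_total_reward_eq:
  "expected_total_reward P A n = measure_pmf.expectation (traj P A n) (\<lambda>x. total_reward (fst x))"
  unfolding expected_total_reward_def by (simp add: split_def)

lemma expected_total_reward_le_steps:
  assumes valid: "valid_alg d A" and binary: "\<And>s a. set_pmf (P s a) \<subseteq> {0, 1}"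
  shows "expected_total_reward P A n \<le> real n"
proof -
  have "expected_total_reward P A n \<le> measure_pmf.expectation (traj P A n) (\<lambda>x. real n)"
    unfolding expected_total_reward_eq
  proof (intro expectation_mono_finite_pmf finite_set_pmf_traj
      finite_set_pmf_valid_alg[OF valid] finite_set_pmf_binary[OF binary], clarify)
    fix h s
    assume "(h, s) \<in> set_pmf (traj P A n)"
    then show "total_reward (fst (h, s)) \<le> real n"
      using set_pmf_trajD(1)[OF valid binary] total_reward_le_length by force
  qed
  then show ?thesis
    by simp
qed

text \<open>The supremum in \<open>Jstar\<close> is bounded by \<open>1\<close> because rewards are, so \<open>real_of_ereal\<close> does not
  collapse it to \<open>0\<close>.\<close>

lemma Jstar_ge_of_policy:
  assumes valid: "valid_alg d \<pi>" and binary: "\<And>s a. set_pmf (P s a) \<subseteq> {0, 1}"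
    and lower: "\<And>n. real n * J - C \<le> expected_total_reward P \<pi> n"
  shows "J \<le> Jstar d P"
proof -
  define avg where "avg \<pi>' n = ereal (expected_total_reward P \<pi>' n / real n)" for \<pi>' n
  have "(\<lambda>n. ereal (J - C / real n)) \<longlonglongrightarrow> ereal J"
    using tendsto_diff[OF tendsto_const lim_const_over_n, of J C] by (simp add: tendsto_ereal)
  then have "ereal J = limsup (\<lambda>n. ereal (J - C / real n))"
    by (metis lim_imp_Limsup sequentially_bot)
  also have "\<dots> \<le> limsup (avg \<pi>)"
  proof (intro Limsup_mono eventually_sequentiallyI[of 1])
    fix n :: nat
    assume "1 \<le> n"
    then have "J - C / real n = (real n * J - C) / real n"
      by (simp add: field_simps)
    also have "\<dots> \<le> expected_total_reward P \<pi> n / real n"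
      using lower by (simp add: divide_right_mono)
    finally show "ereal (J - C / real n) \<le> avg \<pi> n"
      by (simp add: avg_def)
  qed
  also have "\<dots> \<le> (SUP \<pi>'\<in>{\<pi>'. valid_alg d \<pi>'}. limsup (avg \<pi>'))"
    using valid by (intro SUP_upper) auto
  finally have ge: "ereal J \<le> (SUP \<pi>'\<in>{\<pi>'. valid_alg d \<pi>'}. limsup (avg \<pi>'))" .
  have le: "(SUP \<pi>'\<in>{\<pi>'. valid_alg d \<pi>'}. limsup (avg \<pi>')) \<le> 1"
  proof (intro SUP_least Limsup_bounded always_eventually allI)
    fix \<pi>' n
    assume "\<pi>' \<in> {\<pi>'. valid_alg d \<pi>'}"
    then have "expected_total_reward P \<pi>' n \<le> real n"
      using binary by (intro expected_total_reward_le_steps) auto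
    then show "avg \<pi>' n \<le> 1"
      by (cases "n = 0") (auto simp: avg_def divide_le_eq_1)
  qed
  show ?thesis
    using ge le unfolding Jstar_def avg_def[symmetric]
    by (cases "SUP \<pi>'\<in>{\<pi>'. valid_alg d \<pi>'}. limsup (avg \<pi>')") auto
qed

section \<open>The logistic function\<close>

lemma exp_le_inverse_one_minus:
  fixes x :: real
  assumes "0 \<le> x" "x < 1"
  shows "exp x \<le> 1 / (1 - x)"
proof -
  have "(1 - x) * exp x \<le> exp (- x) * exp x"
    using exp_ge_add_one_self[of "- x"] by (intro mult_right_mono) auto
  then show ?thesis
    using assms by (simp add: field_simps flip: exp_add)
qed

lemma exp_diff_le_exp_mult:
  fixes x y :: real
  shows "exp y - exp x \<le> exp y * (y - x)"
proof -
  have "exp y * (1 + (x - y)) \<le> exp y * exp (x - y)"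
    by (intro mult_left_mono) auto
  then show ?thesis
    by (simp add: algebra_simps flip: exp_add)
qed

definition logistic :: "real \<Rightarrow> real \<Rightarrow> real" where
  "logistic c x = 1 / (1 + c * exp (- x))"

context
  fixes c :: real
  assumes c_pos: "0 < c"
begin

lemma logistic_pos: "0 < logistic c x"
  using c_pos by (simp add: logistic_def add_pos_pos)

lemma logistic_diff:
  "logistic c y - logistic c x =
     c * (exp (- x) - exp (- y)) / ((1 + c * exp (- y)) * (1 + c * exp (- x)))"
proof -
  have "0 < 1 + c * exp (- y)" "0 < 1 + c * exp (- x)"
    using c_pos by (simp_all add: add_pos_pos)
  then show ?thesis
    by (simp add: logistic_def field_simps)
qed

lemma logistic_mono: "x \<le> y \<Longrightarrow> logistic c x \<le> logistic c y"
  using c_pos by (simp add: logistic_def frac_le add_pos_pos)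

lemma logistic_gap:
  assumes "- b \<le> x" "x \<le> b"
  shows "c * exp (- b) / ((1 + c * exp b) * (1 + c * exp (- b))) * (b - x)
           \<le> logistic c b - logistic c x"
proof -
  have "exp (- b) * (1 + (b - x)) \<le> exp (- b) * exp (b - x)"
    by (intro mult_left_mono) auto
  also have "\<dots> = exp (- x)"
    by (simp flip: exp_add)
  finally have "exp (- b) * (b - x) \<le> exp (- x) - exp (- b)"
    by (simp add: algebra_simps)
  then have num: "c * exp (- b) * (b - x) \<le> c * (exp (- x) - exp (- b))"
    using c_pos by (simp add: mult.assoc mult_left_mono)
  have den: "(1 + c * exp (- b)) * (1 + c * exp (- x)) \<le> (1 + c * exp b) * (1 + c * exp (- b))"
    using assms c_pos by (simp add: add_pos_pos mult.commute mult_left_mono)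
  have "c * exp (- b) / ((1 + c * exp b) * (1 + c * exp (- b))) * (b - x)
      \<le> c * (exp (- x) - exp (- b)) / ((1 + c * exp (- b)) * (1 + c * exp (- x)))"
    using num den assms c_pos by (simp add: frac_le add_pos_pos)
  then show ?thesis
    by (simp add: logistic_diff)
qed

lemma logistic_diff_le:
  assumes "x \<le> y"
  shows "logistic c y - logistic c x \<le> (exp y - exp x) / c"
proof -
  have "logistic c y - logistic c x
      \<le> c * (exp (- x) - exp (- y)) / ((c * exp (- y)) * (c * exp (- x)))"
    unfolding logistic_diff using assms c_pos by (intro frac_le mult_mono) auto
  also have "\<dots> = (exp y - exp x) / c"
    using c_pos by (simp add: exp_minus field_simps)
  finally show ?thesis .
qed

lemma logistic_lipschitz:
  assumes "x \<le> b" "y \<le> b"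
  shows "\<bar>logistic c y - logistic c x\<bar> \<le> exp b * \<bar>y - x\<bar> / c"
proof -
  have one_sided: "logistic c q - logistic c p \<le> exp b * (q - p) / c" if "p \<le> q" "q \<le> b" for p q
  proof -
    have "logistic c q - logistic c p \<le> (exp q - exp p) / c"
      using \<open>p \<le> q\<close> by (rule logistic_diff_le)
    also have "\<dots> \<le> exp q * (q - p) / c"
      using exp_diff_le_exp_mult[of q p] c_pos by (intro divide_right_mono) auto
    also have "\<dots> \<le> exp b * (q - p) / c"
      using that c_pos by (intro divide_right_mono mult_right_mono) auto
    finally show ?thesis .
  qed
  show ?thesis
    using one_sided[of x y] one_sided[of y x] logistic_mono[of x y] logistic_mono[of y x] assms
    by (cases "x \<le> y") auto
qed

lemma logistic_ge:
  assumes "0 \<le> b" "- b \<le> x"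
  shows "exp (- b) / (1 + c) \<le> logistic c x"
proof -
  have "exp (- b) * (1 + c * exp b) = exp (- b) + c"
    by (simp add: algebra_simps flip: exp_add)
  also have "\<dots> \<le> 1 + c"
    using assms by simp
  finally have "exp (- b) / (1 + c) \<le> logistic c (- b)"
    using c_pos by (simp add: logistic_def field_simps add_pos_pos)
  also have "\<dots> \<le> logistic c x"
    using assms by (intro logistic_mono)
  finally show ?thesis .
qed

end

section \<open>Sign vectors and inner products\<close>

lemma length_actions: "a \<in> actions d \<Longrightarrow> length a = d - 1"
  by (simp add: actions_def)

lemma actions_nth:
  assumes "a \<in> actions d" "i < d - 1"
  shows "a ! i = 1 \<or> a ! i = -1"
proof -
  have "a ! i \<in> set a"
    using assms by (intro nth_mem) (simp add: length_actions)
  then show ?thesis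
    using assms(1) unfolding actions_def by blast
qed

definition flip_sign :: "nat \<Rightarrow> action \<Rightarrow> action" where
  "flip_sign i \<sigma> = \<sigma>[i := - (\<sigma> ! i)]"

lemma flip_sign_flip_sign [simp]: "flip_sign i (flip_sign i \<sigma>) = \<sigma>"
  by (cases "i < length \<sigma>") (simp_all add: flip_sign_def list_update_beyond)

lemma nth_flip_sign: "i < length \<sigma> \<Longrightarrow> flip_sign i \<sigma> ! j = (if j = i then - (\<sigma> ! i) else \<sigma> ! j)"
  by (simp add: flip_sign_def)

lemma flip_sign_in_actions: "\<sigma> \<in> actions d \<Longrightarrow> i < d - 1 \<Longrightarrow> flip_sign i \<sigma> \<in> actions d"
  using actions_nth[of \<sigma> d i] set_update_subset_insert[of \<sigma> i "- (\<sigma> ! i)"]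
  unfolding actions_def flip_sign_def by auto

definition mismatch :: "action \<Rightarrow> nat \<Rightarrow> action \<Rightarrow> real" where
  "mismatch \<sigma> i a = (if a ! i = \<sigma> ! i then 0 else 1)"

lemma sum_mismatch_nonneg: "0 \<le> (\<Sum>i<n. mismatch \<sigma> i a)"
  by (intro sum_nonneg) (simp add: mismatch_def)

lemma sum_mismatch_le: "(\<Sum>i<n. mismatch \<sigma> i a) \<le> real n"
  using sum_mono[of "{..<n}" "\<lambda>i. mismatch \<sigma> i a" "\<lambda>_. 1"] by (simp add: mismatch_def)

lemma ip_conv_sum: "length u = length v \<Longrightarrow> ip u v = (\<Sum>i<length u. u ! i * v ! i)"
  by (simp add: ip_def sum_list_sum_nth atLeast0LessThan)

lemma ip_append: "length u = length v \<Longrightarrow> ip (u @ [x]) (v @ [y]) = ip u v + x * y"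
  by (simp add: ip_def)

lemma ip_replicate_zero: "ip (replicate n 0) v = 0"
  unfolding ip_def by (induction n arbitrary: v) (auto simp: zip_Cons1 split: list.splits)

lemma ip_scale_inverse:
  "length a = length t \<Longrightarrow> k \<noteq> 0 \<Longrightarrow> ip (map (\<lambda>x. - k * x) a) (map (\<lambda>x. x / k) t) = - ip a t"
  by (induction a t rule: list_induct2) (simp_all add: ip_def)

lemma ip_scale_right: "length a = length t \<Longrightarrow> ip a (map (\<lambda>x. k * x) t) = k * ip a t"
  by (induction a t rule: list_induct2) (simp_all add: ip_def algebra_simps)

lemma ip_actions:
  assumes "a \<in> actions d" "\<sigma> \<in> actions d"
  shows "ip a \<sigma> = real (d - 1) - 2 * (\<Sum>i<d - 1. mismatch \<sigma> i a)"
proof -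
  have "ip a \<sigma> = (\<Sum>i<d - 1. a ! i * \<sigma> ! i)"
    using assms by (simp add: ip_conv_sum length_actions)
  also have "\<dots> = (\<Sum>i<d - 1. 1 - 2 * mismatch \<sigma> i a)"
  proof (intro sum.cong refl)
    fix i
    assume "i \<in> {..<d - 1}"
    then show "a ! i * \<sigma> ! i = 1 - 2 * mismatch \<sigma> i a"
      using actions_nth[OF assms(1), of i] actions_nth[OF assms(2), of i] by (auto simp: mismatch_def)
  qed
  finally show ?thesis
    by (simp add: sum_subtractf sum_distrib_left)
qed

lemma sum_mismatch_flip_sign:
  assumes "a \<in> actions d" "\<sigma> \<in> actions d" "i < d - 1"
  shows "(\<Sum>j<d - 1. mismatch (flip_sign i \<sigma>) j a) = (\<Sum>j<d - 1. mismatch \<sigma> j a) + (1 - 2 * mismatch \<sigma> i a)"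
proof -
  have "(\<Sum>j<d - 1. mismatch (flip_sign i \<sigma>) j a)
      = (\<Sum>j<d - 1. mismatch \<sigma> j a + (if j = i then 1 - 2 * mismatch \<sigma> i a else 0))"
    using actions_nth[OF assms(1,3)] actions_nth[OF assms(2,3)] assms
    by (intro sum.cong) (auto simp: mismatch_def nth_flip_sign length_actions)
  then show ?thesis
    using assms(3) by (simp add: sum.distrib)
qed

section \<open>Transitions of the two-state model\<close>

lemma p1_pos: "0 < p1 d D T \<theta> s a"
  and p1_less_1: "p1 d D T \<theta> s a < 1"
  unfolding p1_def by (auto simp: add_pos_pos)

lemma set_pmf_trans: "set_pmf (trans d D T \<theta> s a) \<subseteq> {0, 1}"
  unfolding trans_def by auto

lemma expectation_trans:
  "measure_pmf.expectation (trans d D T \<theta> s a) (f :: nat \<Rightarrow> real)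
     = p1 d D T \<theta> s a * f 1 + (1 - p1 d D T \<theta> s a) * f 0"
  using p1_pos[of d D T \<theta> s a] p1_less_1[of d D T \<theta> s a]
  by (simp add: trans_def integral_bernoulli_pmf algebra_simps)

lemma bernoulli_chi_square:
  fixes q q' :: real
  assumes "0 < q" "q < 1"
  shows "q * (q' / q)\<^sup>2 + (1 - q) * ((1 - q') / (1 - q))\<^sup>2 = 1 + (q' - q)\<^sup>2 / (q * (1 - q))"
proof -
  have "q \<noteq> 0" "1 - q \<noteq> 0"
    using assms by auto
  then have "q * (q' / q)\<^sup>2 + (1 - q) * ((1 - q') / (1 - q))\<^sup>2 = q'\<^sup>2 / q + (1 - q')\<^sup>2 / (1 - q)"
    by (simp add: power2_eq_square)
  also have "\<dots> = (q'\<^sup>2 * (1 - q) + (1 - q')\<^sup>2 * q) / (q * (1 - q))"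
    using \<open>q \<noteq> 0\<close> \<open>1 - q \<noteq> 0\<close> by (simp add: field_simps)
  also have "q'\<^sup>2 * (1 - q) + (1 - q')\<^sup>2 * q = q * (1 - q) + (q' - q)\<^sup>2"
    by (simp add: power2_eq_square algebra_simps)
  also have "(q * (1 - q) + (q' - q)\<^sup>2) / (q * (1 - q)) = 1 + (q' - q)\<^sup>2 / (q * (1 - q))"
    using \<open>q \<noteq> 0\<close> \<open>1 - q \<noteq> 0\<close> by (simp add: add_divide_distrib)
  finally show ?thesis .
qed

definition trans_ratio :: "nat \<Rightarrow> real \<Rightarrow> nat \<Rightarrow> real list \<Rightarrow> real list \<Rightarrow> nat \<Rightarrow> action \<Rightarrow> nat \<Rightarrow> real" where
  "trans_ratio d D T \<theta> \<theta>' s a s' =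
     (if s' = 1 then p1 d D T \<theta>' s a / p1 d D T \<theta> s a
      else (1 - p1 d D T \<theta>' s a) / (1 - p1 d D T \<theta> s a))"

lemma expectation_trans_change:
  "measure_pmf.expectation (trans d D T \<theta>' s a) (f :: nat \<Rightarrow> real) =
   measure_pmf.expectation (trans d D T \<theta> s a) (\<lambda>s'. f s' * trans_ratio d D T \<theta> \<theta>' s a s')"
  using p1_pos[of d D T \<theta> s a] p1_less_1[of d D T \<theta> s a]
  by (simp add: expectation_trans trans_ratio_def field_simps)

lemma expectation_trans_ratio_sq:
  "measure_pmf.expectation (trans d D T \<theta> s a) (\<lambda>s'. (trans_ratio d D T \<theta> \<theta>' s a s')\<^sup>2) =
   1 + (p1 d D T \<theta>' s a - p1 d D T \<theta> s a)\<^sup>2 / (p1 d D T \<theta> s a * (1 - p1 d D T \<theta> s a))"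
  using bernoulli_chi_square[OF p1_pos p1_less_1, of d D T \<theta> s a "p1 d D T \<theta>' s a"]
  by (simp add: expectation_trans trans_ratio_def)

section \<open>Parameters of the hard instances\<close>

locale hard_instance =
  fixes d :: nat and D :: real and T :: nat
  assumes d_ge_2: "2 \<le> d" and D_ge: "101 \<le> D" and T_ge: "45 * real (d - 1) ^ 2 * D \<le> real T"
begin

text \<open>In the paper's notation \<open>dim = d - 1\<close>, \<open>u = \<Delta>/\<delta>\<close>, \<open>b = \<Delta>bar\<close> and \<open>c = \<delta>\<^sup>-\<^sup>1 - 1\<close>.\<close>

definition dim :: real where "dim = real (d - 1)"
definition u :: real where "u = D * Delta d D T"
definition b :: real where "b = Deltabar d D T"
definition c :: real where "c = D - 1"
definition \<epsilon> :: real where "\<epsilon> = b / dim"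

lemma dim_ge_1: "1 \<le> dim"
  using d_ge_2 by (simp add: dim_def)

lemma real_d_eq: "real d = dim + 1"
  using d_ge_2 by (simp add: dim_def)

lemma T_pos: "0 < real T"
proof -
  have "0 < 45 * real (d - 1) ^ 2 * D"
    using d_ge_2 D_ge by simp
  then show ?thesis
    using T_ge by linarith
qed

lemma c_ge: "100 \<le> c"
  using D_ge by (simp add: c_def)

lemma u_sq: "u\<^sup>2 * (810 * ln 2 * real T) = D * dim\<^sup>2"
proof -
  define S where "S = sqrt (2/5 * (real T * D) * ln 2)"
  have S_sq: "S\<^sup>2 = 2/5 * (real T * D) * ln 2"
    unfolding S_def using T_pos D_ge by (intro real_sqrt_pow2) simp
  have "0 < S"
    unfolding S_def using T_pos D_ge by simp
  have "u = D * (dim / (45 * S))"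
    by (simp add: u_def Delta_def delta_def S_def dim_def)
  then have "u * (45 * S) = D * dim"
    using \<open>0 < S\<close> by simp
  then have "(u * (45 * S))\<^sup>2 = (D * dim)\<^sup>2"
    by simp
  then have "u\<^sup>2 * (2025 * S\<^sup>2) = (D * dim)\<^sup>2"
    by (simp add: power_mult_distrib)
  then have "D * (u\<^sup>2 * (810 * ln 2 * real T)) = D * (D * dim\<^sup>2)"
    unfolding S_sq by (simp add: power2_eq_square algebra_simps)
  then show ?thesis
    using D_ge by simp
qed

lemma u_pos: "0 < u"
  using dim_ge_1 D_ge T_pos by (simp add: u_def Delta_def delta_def dim_def)

lemma u_le: "u \<le> 1/150"
proof (rule power2_le_imp_le)
  have "u\<^sup>2 * (24300 * (D * dim\<^sup>2)) = u\<^sup>2 * (810 * (2/3) * (45 * dim\<^sup>2 * D))"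
    by simp
  also have "\<dots> \<le> u\<^sup>2 * (810 * ln 2 * real T)"
    using ln2_ge_two_thirds T_ge D_ge by (intro mult_left_mono mult_mono) (auto simp: dim_def)
  also have "\<dots> = D * dim\<^sup>2"
    by (rule u_sq)
  finally have "u\<^sup>2 * 24300 * (D * dim\<^sup>2) \<le> D * dim\<^sup>2"
    by (simp only: mult.assoc)
  then have "u\<^sup>2 * 24300 \<le> 1"
    using dim_ge_1 D_ge by (simp only: mult_le_cancel_right2) simp
  then show "u\<^sup>2 \<le> (1/150)\<^sup>2"
    by (simp add: power2_eq_square)
qed simp

lemma u_T_ge: "dim * sqrt (D * real T) / 29 \<le> u * real T"
proof (rule power2_le_imp_le)
  have "(dim * sqrt (D * real T) / 29)\<^sup>2 = D * dim\<^sup>2 * real T / 841"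
    using D_ge T_pos by (simp add: power_divide power_mult_distrib)
  also have "\<dots> \<le> D * dim\<^sup>2 * real T / (810 * ln 2)"
    using D_ge T_pos ln_2_less_1 by (intro divide_left_mono) auto
  also have "\<dots> = (u * real T)\<^sup>2"
    using u_sq T_pos by (simp add: field_simps power2_eq_square)
  finally show "(dim * sqrt (D * real T) / 29)\<^sup>2 \<le> (u * real T)\<^sup>2" .
qed (use u_pos T_pos in simp)

lemma exp_b: "exp b = (1 + u) * c / (c - u)"
proof -
  have "0 < c - u" "0 < D"
    using c_ge u_le D_ge by auto
  have Delta_eq: "Delta d D T = u / D"
    using \<open>0 < D\<close> by (simp add: u_def)
  have "(1 - delta D) * (delta D + Delta d D T) = c * (1 + u) / D\<^sup>2"
    using \<open>0 < D\<close> by (simp add: delta_def Delta_eq c_def field_simps power2_eq_square)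
  moreover have "delta D * (1 - delta D - Delta d D T) = (c - u) / D\<^sup>2"
    using \<open>0 < D\<close> by (simp add: delta_def Delta_eq c_def field_simps power2_eq_square)
  ultimately have "((1 - delta D) * (delta D + Delta d D T)) / (delta D * (1 - delta D - Delta d D T))
      = (1 + u) * c / (c - u)"
    using \<open>0 < D\<close> by (simp add: mult.commute)
  moreover have "0 < (1 + u) * c / (c - u)"
    using \<open>0 < c - u\<close> u_pos c_ge by simp
  ultimately show ?thesis
    by (simp add: b_def Deltabar_def)
qed

lemma b_eq: "b = ln ((1 + u) * c / (c - u))"
  by (metis exp_b ln_exp)

lemma b_ge: "u / 2 \<le> b"
proof -
  have "u / 2 \<le> u - u\<^sup>2"
    using u_pos u_le by (simp add: power2_eq_square)
  also have "\<dots> \<le> ln (1 + u)"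
    using u_pos u_le by (intro ln_one_plus_pos_lower_bound) auto
  also have "\<dots> \<le> b"
  proof -
    have "0 < c - u"
      using c_ge u_le by simp
    then have "1 + u \<le> (1 + u) * c / (c - u)"
      using u_pos c_ge by (simp add: field_simps)
    then show ?thesis
      unfolding b_eq using u_pos by simp
  qed
  finally show ?thesis .
qed

lemma b_le: "b \<le> 51/50 * u"
proof -
  have "0 < c - u"
    using c_ge u_le by auto
  have "b \<le> (1 + u) * c / (c - u) - 1"
    unfolding b_eq using \<open>0 < c - u\<close> u_pos c_ge by (intro ln_le_minus_one) simp
  also have "\<dots> = u * (c + 1) / (c - u)"
    using \<open>0 < c - u\<close> by (simp add: field_simps)
  also have "\<dots> \<le> 51/50 * u"
  proof -
    have "u * (c + 1) * 50 \<le> 51 * u * (c - u)"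
      using mult_left_mono[of "50 + 51 * u" c u] u_pos u_le c_ge by (simp add: algebra_simps)
    then show ?thesis
      using \<open>0 < c - u\<close> by (simp add: field_simps)
  qed
  finally show ?thesis .
qed

lemma b_pos: "0 < b"
  using b_ge u_pos by linarith

lemma b_small: "b \<le> 1/100"
  using b_le u_le by linarith

lemma \<epsilon>_pos: "0 < \<epsilon>"
  using b_pos dim_ge_1 by (simp add: \<epsilon>_def)

lemma \<epsilon>_dim: "\<epsilon> * dim = b"
  using dim_ge_1 by (simp add: \<epsilon>_def)

lemma alpha_eq: "alpha d D T = sqrt (b / (dim * (1 + b)))"
  by (simp add: alpha_def b_def dim_def)

lemma beta_eq: "beta d D T = sqrt (1 / (1 + b))"
  by (simp add: beta_def b_def)

lemma alpha_pos: "0 < alpha d D T"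
  using b_pos dim_ge_1 by (simp add: alpha_eq)

lemma beta_pos: "0 < beta d D T"
  using b_pos by (simp add: beta_eq)

lemma alpha_sq: "(alpha d D T)\<^sup>2 = b / (dim * (1 + b))"
  using b_pos dim_ge_1 by (simp add: alpha_eq)

lemma beta_sq: "(beta d D T)\<^sup>2 = 1 / (1 + b)"
  using b_pos by (simp add: beta_eq)

lemma ln_inverse_delta: "ln (1 / delta D - 1) = ln c"
  by (simp add: delta_def c_def)

lemma p1_state0:
  assumes "length \<theta> = d - 1" "length a = d - 1"
  shows "p1 d D T \<theta> 0 a = logistic c (ip a \<theta>)"
proof -
  have "ip (phi d D T 0 a 0) (thetabar d D T \<theta>) = ln c - ip a \<theta>"
    using assms alpha_pos beta_pos
    by (simp add: phi_def thetabar_def ln_inverse_delta ip_append ip_scale_inverse)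
  moreover have "ip (phi d D T 0 a 1) (thetabar d D T \<theta>) = 0"
    using assms by (simp add: phi_def thetabar_def ip_append ip_replicate_zero)
  moreover have "exp (ln c - ip a \<theta>) = c * exp (- ip a \<theta>)"
    using c_ge by (simp add: exp_diff exp_minus field_simps)
  ultimately show ?thesis
    by (simp add: p1_def logistic_def add.commute)
qed

lemma p1_state1:
  assumes "length \<theta> = d - 1"
  shows "p1 d D T \<theta> 1 a = 1 - 1 / D"
proof -
  have "ip (phi d D T 1 a 0) (thetabar d D T \<theta>) = 0"
    using assms by (simp add: phi_def thetabar_def ip_append ip_replicate_zero)
  moreover have "ip (phi d D T 1 a 1) (thetabar d D T \<theta>) = ln c"
    using assms beta_pos by (simp add: phi_def thetabar_def ln_inverse_delta ip_append ip_replicate_zero)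
  ultimately have "p1 d D T \<theta> 1 a = c / (1 + c)"
    using c_ge by (simp add: p1_def)
  then show ?thesis
    using D_ge by (simp add: c_def field_simps)
qed

definition theta_of :: "action \<Rightarrow> real list" where
  "theta_of \<sigma> = map (\<lambda>x. \<epsilon> * x) \<sigma>"

definition logit :: "action \<Rightarrow> action \<Rightarrow> real" where
  "logit \<sigma> a = \<epsilon> * ip a \<sigma>"

lemma length_theta_of: "length (theta_of \<sigma>) = length \<sigma>"
  by (simp add: theta_of_def)

lemma theta_of_in_Thetas:
  assumes "\<sigma> \<in> actions d"
  shows "theta_of \<sigma> \<in> Thetas d D T"
proof -
  have "x = 1 \<or> x = -1" if "x \<in> set \<sigma>" for x
    using assms that by (auto simp: actions_def)
  then show ?thesis
    using assms by (auto simp: Thetas_def theta_of_def actions_def \<epsilon>_def b_def dim_def)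
qed

lemma p1_theta_of_state0:
  "a \<in> actions d \<Longrightarrow> \<sigma> \<in> actions d \<Longrightarrow> p1 d D T (theta_of \<sigma>) 0 a = logistic c (logit \<sigma> a)"
  by (simp add: p1_state0 length_theta_of length_actions logit_def theta_of_def ip_scale_right)

lemma p1_theta_of_state1: "\<sigma> \<in> actions d \<Longrightarrow> s = 1 \<Longrightarrow> p1 d D T (theta_of \<sigma>) s a = 1 - 1 / D"
  using p1_state1[of "theta_of \<sigma>" a] by (simp add: length_theta_of length_actions)

lemma b_minus_logit:
  "a \<in> actions d \<Longrightarrow> \<sigma> \<in> actions d \<Longrightarrow> b - logit \<sigma> a = 2 * \<epsilon> * (\<Sum>i<d - 1. mismatch \<sigma> i a)"
  using \<epsilon>_dim unfolding dim_def by (simp add: logit_def ip_actions algebra_simps)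

lemma logit_self: "\<sigma> \<in> actions d \<Longrightarrow> logit \<sigma> \<sigma> = b"
  using b_minus_logit[of \<sigma> \<sigma>] by (simp add: mismatch_def)

lemma logit_bounds:
  assumes "a \<in> actions d" "\<sigma> \<in> actions d"
  shows "- b \<le> logit \<sigma> a" "logit \<sigma> a \<le> b"
proof -
  have "0 \<le> 2 * \<epsilon> * (\<Sum>i<d - 1. mismatch \<sigma> i a)"
    using \<epsilon>_pos sum_mismatch_nonneg by simp
  moreover have "2 * \<epsilon> * (\<Sum>i<d - 1. mismatch \<sigma> i a) \<le> 2 * \<epsilon> * dim"
    using \<epsilon>_pos sum_mismatch_le by (simp add: dim_def)
  ultimately show "- b \<le> logit \<sigma> a" "logit \<sigma> a \<le> b"
    using b_minus_logit[OF assms] \<epsilon>_dim by linarith+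
qed

lemma abs_logit_flip_sign:
  assumes "a \<in> actions d" "\<sigma> \<in> actions d" "i < d - 1"
  shows "\<bar>logit (flip_sign i \<sigma>) a - logit \<sigma> a\<bar> = 2 * \<epsilon>"
proof -
  have "b - logit (flip_sign i \<sigma>) a
      = 2 * \<epsilon> * (\<Sum>j<d - 1. mismatch \<sigma> j a) + 2 * \<epsilon> * (1 - 2 * mismatch \<sigma> i a)"
    using b_minus_logit[OF assms(1) flip_sign_in_actions[OF assms(2,3)]] sum_mismatch_flip_sign[OF assms]
    by (simp add: distrib_left)
  then have "logit (flip_sign i \<sigma>) a - logit \<sigma> a = - 2 * \<epsilon> * (1 - 2 * mismatch \<sigma> i a)"
    using b_minus_logit[OF assms(1,2)] by linarith
  moreover have "\<bar>1 - 2 * mismatch \<sigma> i a\<bar> = 1"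
    by (simp add: mismatch_def)
  ultimately show ?thesis
    using \<epsilon>_pos by (simp add: abs_mult)
qed

lemma logistic_b: "logistic c b = (1 + u) / D"
proof -
  have "exp (- b) = (c - u) / ((1 + u) * c)"
    using exp_b by (simp add: exp_minus)
  then have "c * exp (- b) = (c - u) / (1 + u)"
    using c_ge by simp
  then have "logistic c b = 1 / (1 + (c - u) / (1 + u))"
    by (simp add: logistic_def)
  also have "\<dots> = (1 + u) / D"
    using u_pos by (simp add: c_def field_simps)
  finally show ?thesis .
qed

text \<open>\<open>\<kappa>\<close> bounds the slope of the logistic function on \<open>[-b, b]\<close> from below; \<open>\<chi>\<^sup>2\<close> bounds the
  chi-square divergence between the transitions of two instances whose logits differ by \<open>2\<epsilon>\<close>.\<close>

definition \<kappa> :: real where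
  "\<kappa> = c * exp (- b) / ((1 + c * exp b) * (1 + c * exp (- b)))"

definition chi_sq :: real where
  "chi_sq = 8 * exp (3 * b) * \<epsilon>\<^sup>2 * D / c\<^sup>2"

definition \<tau> :: real where
  "\<tau> = sqrt ((1 + chi_sq) ^ T - 1)"

lemma \<kappa>_pos: "0 < \<kappa>"
  using c_ge by (simp add: \<kappa>_def add_pos_pos)

lemma chi_sq_nonneg: "0 \<le> chi_sq"
  using D_ge by (simp add: chi_sq_def)

lemma logistic_chi_sq_le:
  assumes "- b \<le> x" "x \<le> b" "y \<le> b" "\<bar>y - x\<bar> \<le> 2 * \<epsilon>"
  shows "(logistic c y - logistic c x)\<^sup>2 / (logistic c x * (1 - logistic c x)) \<le> chi_sq"
proof -
  have c_pos: "0 < c"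
    using c_ge by simp
  have "\<bar>logistic c y - logistic c x\<bar> \<le> exp b * \<bar>y - x\<bar> / c"
    using c_pos assms(2,3) by (rule logistic_lipschitz)
  also have "\<dots> \<le> exp b * (2 * \<epsilon>) / c"
    using assms(4) c_pos by (intro divide_right_mono mult_left_mono) auto
  finally have num: "(logistic c y - logistic c x)\<^sup>2 \<le> (exp b * (2 * \<epsilon>) / c)\<^sup>2"
    by (metis abs_ge_zero power2_abs power_mono)
  have "logistic c x \<le> logistic c b"
    using c_pos assms(2) by (rule logistic_mono)
  moreover have "(1 + u) / D \<le> 1/2"
    using u_le D_ge by (simp add: field_simps)
  ultimately have "1/2 \<le> 1 - logistic c x"
    unfolding logistic_b by linarith
  moreover have "exp (- b) / D \<le> logistic c x"
    using logistic_ge[OF c_pos _ assms(1)] b_pos by (simp add: c_def)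
  ultimately have den: "exp (- b) / D * (1/2) \<le> logistic c x * (1 - logistic c x)"
    using D_ge logistic_pos[OF c_pos, of x] by (intro mult_mono) auto
  have "(logistic c y - logistic c x)\<^sup>2 / (logistic c x * (1 - logistic c x))
      \<le> (exp b * (2 * \<epsilon>) / c)\<^sup>2 / (exp (- b) / D * (1/2))"
    using num den D_ge by (intro frac_le) auto
  also have "\<dots> = chi_sq"
    using c_pos D_ge
    by (simp add: chi_sq_def field_simps power2_eq_square exp_minus mult_exp_exp flip: exp_add)
  finally show ?thesis .
qed

lemma T_chi_sq_le: "real T * chi_sq \<le> 1/20"
proof -
  have "\<epsilon>\<^sup>2 * real T = b\<^sup>2 * real T / dim\<^sup>2"
    by (simp add: \<epsilon>_def power_divide)
  also have "\<dots> \<le> (51/50 * u)\<^sup>2 * real T / dim\<^sup>2"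
    using b_le b_pos T_pos by (intro divide_right_mono mult_right_mono power_mono) auto
  also have "\<dots> = (51/50)\<^sup>2 * D / (810 * ln 2)"
    using u_sq dim_ge_1 by (simp add: field_simps power_mult_distrib)
  also have "\<dots> \<le> (51/50)\<^sup>2 * D / 540"
    using ln2_ge_two_thirds D_ge by (intro divide_left_mono) auto
  finally have \<epsilon>_T: "\<epsilon>\<^sup>2 * real T \<le> (51/50)\<^sup>2 * D / 540" .
  have "exp (3 * b) \<le> 1 / (1 - 3 * b)"
    using b_pos b_small by (intro exp_le_inverse_one_minus) auto
  also have "\<dots> \<le> 11/10"
    using b_pos b_small by (simp add: field_simps)
  finally have exp_3b: "exp (3 * b) \<le> 11/10" .
  have D_c: "(D / c)\<^sup>2 \<le> (101/100)\<^sup>2"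
    using c_ge by (intro power_mono) (auto simp: c_def field_simps)
  have "real T * chi_sq = 8 * exp (3 * b) * (\<epsilon>\<^sup>2 * real T) * (D / c\<^sup>2)"
    by (simp add: chi_sq_def)
  also have "\<dots> \<le> 8 * (11/10) * ((51/50)\<^sup>2 * D / 540) * (D / c\<^sup>2)"
    using exp_3b \<epsilon>_T D_ge by (intro mult_mono mult_right_mono) auto
  also have "\<dots> = 8 * (11/10) * (51/50)\<^sup>2 / 540 * (D / c)\<^sup>2"
    by (simp add: power2_eq_square)
  also have "\<dots> \<le> 8 * (11/10) * (51/50)\<^sup>2 / 540 * (101/100)\<^sup>2"
    using D_c by (intro mult_left_mono) auto
  also have "\<dots> \<le> 1/20"
    by (simp add: power2_eq_square)
  finally show ?thesis .
qed

lemma \<tau>_le: "\<tau> \<le> 1/4"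
proof -
  have "(1 + chi_sq) ^ T \<le> exp chi_sq ^ T"
    using chi_sq_nonneg by (intro power_mono) (auto simp: add.commute)
  also have "\<dots> = exp (real T * chi_sq)"
    by (simp add: exp_of_nat_mult)
  also have "\<dots> \<le> 1 / (1 - real T * chi_sq)"
    using T_chi_sq_le T_pos chi_sq_nonneg by (intro exp_le_inverse_one_minus) auto
  also have "\<dots> \<le> 1 + (1/4)\<^sup>2"
    using T_chi_sq_le by (simp add: field_simps power2_eq_square)
  finally show ?thesis
    unfolding \<tau>_def by (intro real_le_lsqrt) auto
qed

end

section \<open>Regret of a single instance\<close>

definition mismatch_count :: "action \<Rightarrow> nat \<Rightarrow> hist \<Rightarrow> real" where
  "mismatch_count \<sigma> i h = sum_list (map (\<lambda>(s, a). if s = 0 then mismatch \<sigma> i a else 0) h)"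

definition visits0 :: "hist \<Rightarrow> real" where
  "visits0 h = sum_list (map (\<lambda>(s, a). if s = 0 then 1 else 0) h)"

lemma mismatch_count_Nil [simp]: "mismatch_count \<sigma> i [] = 0"
  by (simp add: mismatch_count_def)

lemma mismatch_count_snoc [simp]:
  "mismatch_count \<sigma> i (h @ [(s, a)]) = mismatch_count \<sigma> i h + (if s = 0 then mismatch \<sigma> i a else 0)"
  by (simp add: mismatch_count_def)

lemma visits0_Nil [simp]: "visits0 [] = 0"
  by (simp add: visits0_def)

lemma visits0_snoc [simp]: "visits0 (h @ [(s, a)]) = visits0 h + (if s = 0 then 1 else 0)"
  by (simp add: visits0_def)

lemma mismatch_count_nonneg: "0 \<le> mismatch_count \<sigma> i h"
  unfolding mismatch_count_def mismatch_def by (induction h) auto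

lemma mismatch_count_le_length: "mismatch_count \<sigma> i h \<le> real (length h)"
  unfolding mismatch_count_def mismatch_def by (induction h) auto

lemma mismatch_count_flip_sign:
  assumes "\<forall>x\<in>set h. snd x \<in> actions d" "\<sigma> \<in> actions d" "i < d - 1"
  shows "mismatch_count (flip_sign i \<sigma>) i h = visits0 h - mismatch_count \<sigma> i h"
  using assms(1)
proof (induction h rule: rev_induct)
  case (snoc x h)
  obtain s a where x: "x = (s, a)"
    by (cases x)
  then have "a \<in> actions d"
    using snoc.prems by simp
  then have "mismatch (flip_sign i \<sigma>) i a = 1 - mismatch \<sigma> i a"
    using actions_nth[OF _ assms(3), of a] actions_nth[OF assms(2,3)] assms(2,3)
    by (auto simp: mismatch_def nth_flip_sign length_actions)
  then show ?case
    using snoc by (simp add: x)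
qed simp

context hard_instance
begin

text \<open>For the instance with sign vector \<open>\<sigma>\<close>, the policy \<open>a = \<sigma>\<close> has average reward \<open>J\<close> and bias
  \<open>g = h(x\<^sub>1) - h(x\<^sub>0)\<close>, the stationary probability of \<open>x\<^sub>0\<close> being \<open>\<pi>\<^sub>0\<close>; every coordinate on which
  an action played in \<open>x\<^sub>0\<close> disagrees with \<open>\<sigma>\<close> costs at least \<open>\<rho>\<close> in expected reward.\<close>

definition g :: real where "g = D / (2 + u)"
definition J :: real where "J = (1 + u) / (2 + u)"
definition \<pi>\<^sub>0 :: real where "\<pi>\<^sub>0 = 1 / (2 + u)"
definition \<rho> :: real where "\<rho> = 2 * g * \<kappa> * \<epsilon>"

definition expected_mismatches :: "algorithm \<Rightarrow> action \<Rightarrow> nat \<Rightarrow> real" where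
  "expected_mismatches A \<sigma> i =
     measure_pmf.expectation (traj (trans d D T (theta_of \<sigma>)) A T) (\<lambda>x. mismatch_count \<sigma> i (fst x))"

lemma g_pos: "0 < g"
  using D_ge u_pos by (simp add: g_def)

lemma J_eq: "J = g * logistic c b"
  using D_ge by (simp add: J_def g_def logistic_b)

lemma g_div_D: "g / D = \<pi>\<^sub>0"
  using D_ge by (simp add: g_def \<pi>\<^sub>0_def)

lemma g_times_p1_state1: "g * (1 - 1 / D) = g - \<pi>\<^sub>0"
  using g_div_D by (simp add: algebra_simps)

lemma \<pi>\<^sub>0_plus_J: "\<pi>\<^sub>0 + J = 1"
  using u_pos by (simp add: \<pi>\<^sub>0_def J_def field_simps)

lemma poisson_equation:
  assumes "\<sigma> \<in> actions d" "s \<in> {0, 1}"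
  shows "reward s \<sigma> + g * p1 d D T (theta_of \<sigma>) s \<sigma> = g * real s + J"
proof (cases "s = 0")
  case False
  then have "s = 1"
    using assms(2) by simp
  then show ?thesis
    using assms(1) \<pi>\<^sub>0_plus_J g_times_p1_state1 p1_theta_of_state1[OF assms(1)]
    by (simp add: reward_def)
qed (use assms(1) in \<open>simp add: reward_def p1_theta_of_state0 logit_self J_eq\<close>)

lemma one_step_regret:
  assumes "\<sigma> \<in> actions d" "a \<in> actions d" "s \<in> {0, 1}"
  shows "reward s a + g * p1 d D T (theta_of \<sigma>) s a
           + \<rho> * (\<Sum>i<d - 1. if s = 0 then mismatch \<sigma> i a else 0) \<le> g * real s + J"
proof (cases "s = 0")
  case True
  have "\<rho> * (\<Sum>i<d - 1. mismatch \<sigma> i a) = g * (\<kappa> * (b - logit \<sigma> a))"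
    using b_minus_logit[OF assms(2,1)] by (simp add: \<rho>_def)
  also have "\<dots> \<le> g * (logistic c b - logistic c (logit \<sigma> a))"
    using logistic_gap[of c b "logit \<sigma> a"] logit_bounds[OF assms(2,1)] c_ge g_pos
    by (intro mult_left_mono) (auto simp: \<kappa>_def)
  finally show ?thesis
    using True assms by (simp add: reward_def p1_theta_of_state0 J_eq algebra_simps)
next
  case False
  then have "s = 1"
    using assms(3) by simp
  then show ?thesis
    using poisson_equation[OF assms(1,3)] p1_theta_of_state1[OF assms(1)]
    by (simp add: reward_def)
qed

lemma expected_total_reward_le_mismatch_count:
  assumes \<sigma>: "\<sigma> \<in> actions d" and valid: "valid_alg d A"
  defines "P \<equiv> trans d D T (theta_of \<sigma>)"
  shows "expected_total_reward P A T \<le> real T * J - \<rho> * (\<Sum>i<d - 1. expected_mismatches A \<sigma> i)"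
proof -
  define \<Phi> where "\<Phi> x = - (total_reward (fst x) + g * real (snd x) + \<rho> * (\<Sum>i<d - 1. mismatch_count \<sigma> i (fst x)))"
    for x :: "hist \<times> nat"
  have binary: "\<And>s a. set_pmf (P s a) \<subseteq> {0, 1}"
    unfolding P_def by (rule set_pmf_trans)
  have fin: "finite (set_pmf (traj P A T))"
    using valid binary by (rule finite_set_pmf_traj_valid)
  have "\<Phi> ([], 0) + real T * - J \<le> measure_pmf.expectation (traj P A T) \<Phi>"
  proof (rule expectation_traj_potential_ge_valid[OF valid])
    fix h and s :: nat and a
    assume "s \<in> {0, 1}" "a \<in> actions d"
    then show "\<Phi> (h, s) + - J \<le> measure_pmf.expectation (P s a) (\<lambda>s'. \<Phi> (h @ [(s, a)], s'))"
      using one_step_regret[OF \<sigma>] by (simp add: \<Phi>_def P_def expectation_trans sum.distrib algebra_simps)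
  qed (rule binary)
  moreover have "\<Phi> ([], 0) = 0"
    by (simp add: \<Phi>_def)
  moreover have "0 \<le> g * measure_pmf.expectation (traj P A T) (\<lambda>x. real (snd x))"
    using g_pos by (simp add: integral_nonneg_AE)
  moreover have "measure_pmf.expectation (traj P A T) \<Phi> =
      - (expected_total_reward P A T + g * measure_pmf.expectation (traj P A T) (\<lambda>x. real (snd x))
         + \<rho> * (\<Sum>i<d - 1. expected_mismatches A \<sigma> i))"
    using fin
    by (simp add: \<Phi>_def[abs_def] expected_total_reward_eq expected_mismatches_def P_def
        integrable_measure_pmf_finite integral_sum)
  ultimately show ?thesis
    by linarith
qed

lemma expected_visits0_ge:
  assumes \<sigma>: "\<sigma> \<in> actions d" and valid: "valid_alg d A"
  defines "P \<equiv> trans d D T (theta_of \<sigma>)"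
  shows "real T * \<pi>\<^sub>0 \<le> measure_pmf.expectation (traj P A T) (\<lambda>x. visits0 (fst x))"
proof -
  define \<Psi> where "\<Psi> x = visits0 (fst x) + g * (if snd x = 0 then 1 else 0)" for x :: "hist \<times> nat"
  have binary: "\<And>s a. set_pmf (P s a) \<subseteq> {0, 1}"
    unfolding P_def by (rule set_pmf_trans)
  have fin: "finite (set_pmf (traj P A T))"
    using valid binary by (rule finite_set_pmf_traj_valid)
  have "\<Psi> ([], 0) + real T * \<pi>\<^sub>0 \<le> measure_pmf.expectation (traj P A T) \<Psi>"
  proof (rule expectation_traj_potential_ge_valid[OF valid])
    fix h and s :: nat and a
    assume s: "s \<in> {0, 1}" and a: "a \<in> actions d"
    show "\<Psi> (h, s) + \<pi>\<^sub>0 \<le> measure_pmf.expectation (P s a) (\<lambda>s'. \<Psi> (h @ [(s, a)], s'))"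
    proof (cases "s = 0")
      case True
      have "g * logistic c (logit \<sigma> a) \<le> J"
        using logistic_mono[of c "logit \<sigma> a" b] logit_bounds[OF a \<sigma>] c_ge g_pos
        by (simp add: J_eq mult_left_mono)
      then show ?thesis
        using True a \<sigma> \<pi>\<^sub>0_plus_J
        by (simp add: \<Psi>_def P_def expectation_trans p1_theta_of_state0 algebra_simps)
    next
      case False
      then have "s = 1"
        using s by simp
      then show ?thesis
        by (simp add: \<Psi>_def P_def expectation_trans p1_theta_of_state1[OF \<sigma>] add_divide_distrib
            g_div_D algebra_simps)
    qed
  qed (rule binary)
  moreover have "\<Psi> ([], 0) = g"
    by (simp add: \<Psi>_def)
  moreover have "measure_pmf.expectation (traj P A T) (\<lambda>x. if snd x = 0 then 1 else 0 :: real) \<le> 1"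
    using expectation_mono_finite_pmf[OF fin, of "\<lambda>x. if snd x = 0 then 1 else 0" "\<lambda>_. 1"] by simp
  then have "measure_pmf.expectation (traj P A T) \<Psi> \<le> measure_pmf.expectation (traj P A T) (\<lambda>x. visits0 (fst x)) + g"
    using fin g_pos by (simp add: \<Psi>_def[abs_def] integrable_measure_pmf_finite mult_left_le)
  ultimately show ?thesis
    by linarith
qed

lemma J_le_Jstar:
  assumes \<sigma>: "\<sigma> \<in> actions d"
  shows "J \<le> Jstar d (trans d D T (theta_of \<sigma>))"
proof -
  define P where "P = trans d D T (theta_of \<sigma>)"
  define \<pi> :: algorithm where "\<pi> = (\<lambda>_ _. return_pmf \<sigma>)"
  have valid: "valid_alg d \<pi>"
    using \<sigma> by (simp add: valid_alg_def \<pi>_def)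
  have binary: "\<And>s a. set_pmf (P s a) \<subseteq> {0, 1}"
    unfolding P_def by (rule set_pmf_trans)
  have "real n * J - g \<le> expected_total_reward P \<pi> n" for n
  proof -
    define \<Phi> where "\<Phi> x = total_reward (fst x) + g * real (snd x)" for x :: "hist \<times> nat"
    have fin: "finite (set_pmf (traj P \<pi> n))"
      using valid binary by (rule finite_set_pmf_traj_valid)
    have "\<Phi> ([], 0) + real n * J \<le> measure_pmf.expectation (traj P \<pi> n) \<Phi>"
    proof (rule expectation_traj_potential_ge)
      fix m h s
      assume "(h, s) \<in> set_pmf (traj P \<pi> m)"
      then have "s \<in> {0, 1}"
        by (rule set_pmf_trajD[OF valid binary])
      then show "\<Phi> (h, s) + J \<le> measure_pmf.expectation (\<pi> h s)
          (\<lambda>a. measure_pmf.expectation (P s a) (\<lambda>s'. \<Phi> (h @ [(s, a)], s')))"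
        using poisson_equation[OF \<sigma>] by (simp add: \<Phi>_def \<pi>_def P_def expectation_trans algebra_simps)
    qed (simp_all add: \<pi>_def finite_set_pmf_binary[OF binary])
    moreover have "measure_pmf.expectation (traj P \<pi> n) (\<lambda>x. real (snd x)) \<le> 1"
      using expectation_mono_finite_pmf[OF fin, of "\<lambda>x. real (snd x)" "\<lambda>_. 1"]
        set_pmf_trajD(2)[OF valid binary] by fastforce
    then have "measure_pmf.expectation (traj P \<pi> n) \<Phi> \<le> expected_total_reward P \<pi> n + g"
      using fin g_pos
      by (simp add: \<Phi>_def[abs_def] expected_total_reward_eq integrable_measure_pmf_finite mult_left_le)
    ultimately show ?thesis
      by (simp add: \<Phi>_def)
  qed
  then show ?thesis
    unfolding P_def by (rule Jstar_ge_of_policy[OF valid binary[unfolded P_def]])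
qed

section \<open>Neighbouring instances\<close>

lemma trans_ratio_chi_sq_le:
  assumes \<sigma>: "\<sigma> \<in> actions d" and i: "i < d - 1" and s: "s \<in> {0, 1}" and a: "a \<in> actions d"
  shows "measure_pmf.expectation (trans d D T (theta_of \<sigma>) s a)
           (\<lambda>s'. (trans_ratio d D T (theta_of \<sigma>) (theta_of (flip_sign i \<sigma>)) s a s')\<^sup>2) \<le> 1 + chi_sq"
proof (cases "s = 0")
  case True
  have \<sigma>': "flip_sign i \<sigma> \<in> actions d"
    using \<sigma> i by (rule flip_sign_in_actions)
  have "(logistic c (logit (flip_sign i \<sigma>) a) - logistic c (logit \<sigma> a))\<^sup>2
          / (logistic c (logit \<sigma> a) * (1 - logistic c (logit \<sigma> a))) \<le> chi_sq"
    using logit_bounds[OF a \<sigma>] logit_bounds[OF a \<sigma>'] abs_logit_flip_sign[OF a \<sigma> i]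
    by (intro logistic_chi_sq_le) auto
  then show ?thesis
    using True a \<sigma> \<sigma>' by (simp add: expectation_trans_ratio_sq p1_theta_of_state0)
next
  case False
  then have "s = 1"
    using s by simp
  then show ?thesis
    using \<sigma> i chi_sq_nonneg
    by (simp add: expectation_trans_ratio_sq p1_theta_of_state1 flip_sign_in_actions)
qed

text \<open>The likelihood ratio of the two trajectory laws has second moment at most \<open>(1 + \<chi>\<^sup>2)\<^sup>T\<close>,
  and the count is at most \<open>T\<close>.\<close>

lemma expected_mismatch_count_flip_sign:
  assumes \<sigma>: "\<sigma> \<in> actions d" and i: "i < d - 1" and valid: "valid_alg d A"
  defines "P \<equiv> trans d D T (theta_of \<sigma>)" and "P' \<equiv> trans d D T (theta_of (flip_sign i \<sigma>))"
  shows "\<bar>measure_pmf.expectation (traj P' A T) (\<lambda>x. mismatch_count \<sigma> i (fst x))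
          - measure_pmf.expectation (traj P A T) (\<lambda>x. mismatch_count \<sigma> i (fst x))\<bar> \<le> real T * \<tau>"
proof -
  define r where "r = trans_ratio d D T (theta_of \<sigma>) (theta_of (flip_sign i \<sigma>))"
  have binary: "\<And>s a. set_pmf (P s a) \<subseteq> {0, 1}" and binary': "\<And>s a. set_pmf (P' s a) \<subseteq> {0, 1}"
    unfolding P_def P'_def by (rule set_pmf_trans)+
  note fin_A = finite_set_pmf_valid_alg[OF valid]
  have fin_P: "\<And>s a. finite (set_pmf (P s a))" and fin_P': "\<And>s a. finite (set_pmf (P' s a))"
    using binary binary' by (blast intro: finite_set_pmf_binary)+
  have fin: "finite (set_pmf (traj P A T))"
    using valid binary by (rule finite_set_pmf_traj_valid)
  have density: "measure_pmf.expectation (P' s a) \<phi> = measure_pmf.expectation (P s a) (\<lambda>s'. \<phi> s' * r s a s')"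
    for s a and \<phi> :: "nat \<Rightarrow> real"
    unfolding P_def P'_def r_def by (rule expectation_trans_change)
  note change = expectation_traj_change_kernel[OF fin_A fin_P fin_P' density]
  have "measure_pmf.expectation (traj P A T) (likelihood_ratio r) = 1"
    using change[where n = T and f = "\<lambda>_. 1"] by simp
  moreover have "\<bar>mismatch_count \<sigma> i (fst x)\<bar> \<le> real T" if "x \<in> set_pmf (traj P A T)" for x
    using that set_pmf_trajD(1)[of d A P "fst x" "snd x" T, OF valid binary]
      mismatch_count_nonneg[of \<sigma> i "fst x"] mismatch_count_le_length[of \<sigma> i "fst x"]
    by simp
  ultimately have "\<bar>measure_pmf.expectation (traj P' A T) (\<lambda>x. mismatch_count \<sigma> i (fst x))
          - measure_pmf.expectation (traj P A T) (\<lambda>x. mismatch_count \<sigma> i (fst x))\<bar>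
      \<le> real T * sqrt (measure_pmf.expectation (traj P A T) (\<lambda>x. (likelihood_ratio r x)\<^sup>2) - 1)"
    unfolding change by (rule expectation_reweight_deviation[OF fin])
  also have "\<dots> \<le> real T * \<tau>"
  proof -
    have "measure_pmf.expectation (traj P A T) (\<lambda>x. (likelihood_ratio r x)\<^sup>2) \<le> (1 + chi_sq) ^ T"
      using valid binary
    proof (rule expectation_likelihood_ratio_sq_le)
      show "measure_pmf.expectation (P s a) (\<lambda>s'. (r s a s')\<^sup>2) \<le> 1 + chi_sq"
        if "s \<in> {0, 1}" "a \<in> actions d" for s a
        using trans_ratio_chi_sq_le[OF \<sigma> i that] by (simp add: P_def r_def)
    qed
    then show ?thesis
      unfolding \<tau>_def by (intro mult_left_mono real_sqrt_le_mono) auto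
  qed
  finally show ?thesis .
qed

lemma expected_mismatches_pair:
  assumes \<sigma>: "\<sigma> \<in> actions d" and i: "i < d - 1" and valid: "valid_alg d A"
  shows "real T * \<pi>\<^sub>0 - real T * \<tau> \<le> expected_mismatches A \<sigma> i + expected_mismatches A (flip_sign i \<sigma>) i"
proof -
  define P' where "P' = trans d D T (theta_of (flip_sign i \<sigma>))"
  have binary': "\<And>s a. set_pmf (P' s a) \<subseteq> {0, 1}"
    unfolding P'_def by (rule set_pmf_trans)
  have fin: "finite (set_pmf (traj P' A T))"
    using valid binary' by (rule finite_set_pmf_traj_valid)
  have "measure_pmf.expectation (traj P' A T) (\<lambda>x. mismatch_count (flip_sign i \<sigma>) i (fst x))
      = measure_pmf.expectation (traj P' A T) (\<lambda>x. visits0 (fst x) - mismatch_count \<sigma> i (fst x))"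
  proof (intro integral_cong_AE AE_pmfI)
    fix x
    assume "x \<in> set_pmf (traj P' A T)"
    then show "mismatch_count (flip_sign i \<sigma>) i (fst x) = visits0 (fst x) - mismatch_count \<sigma> i (fst x)"
      using set_pmf_trajD(3)[of d A P' "fst x" "snd x" T, OF valid binary'] mismatch_count_flip_sign \<sigma> i
      by simp
  qed simp_all
  also have "\<dots> = measure_pmf.expectation (traj P' A T) (\<lambda>x. visits0 (fst x))
      - measure_pmf.expectation (traj P' A T) (\<lambda>x. mismatch_count \<sigma> i (fst x))"
    using fin by (simp add: integrable_measure_pmf_finite)
  finally show ?thesis
    using expected_visits0_ge[OF flip_sign_in_actions[OF \<sigma> i] valid]
      expected_mismatch_count_flip_sign[OF \<sigma> i valid]
    unfolding expected_mismatches_def P'_def by linarith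
qed

text \<open>Since \<open>flip_sign i\<close> is an involution of the sign vectors, summing the pair bound over all
  \<open>\<sigma>\<close> counts every instance twice.\<close>

lemma exists_hard_sign_vector:
  assumes valid: "valid_alg d A"
  shows "\<exists>\<sigma>\<in>actions d. dim * (real T * \<pi>\<^sub>0 - real T * \<tau>) / 2 \<le> (\<Sum>i<d - 1. expected_mismatches A \<sigma> i)"
proof (rule ccontr)
  define X where "X = real T * \<pi>\<^sub>0 - real T * \<tau>"
  assume "\<not> ?thesis"
  then have small: "(\<Sum>i<d - 1. expected_mismatches A \<sigma> i) < dim * X / 2" if "\<sigma> \<in> actions d" for \<sigma>
    using that by (auto simp: X_def)
  have pair_sum: "real (card (actions d)) * X \<le> 2 * (\<Sum>\<sigma>\<in>actions d. expected_mismatches A \<sigma> i)" if "i < d - 1" for i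
  proof -
    have "(\<Sum>\<sigma>\<in>actions d. expected_mismatches A (flip_sign i \<sigma>) i) = (\<Sum>\<sigma>\<in>actions d. expected_mismatches A \<sigma> i)"
      using that
      by (intro sum.reindex_bij_witness[where i = "flip_sign i" and j = "flip_sign i"])
         (auto simp: flip_sign_in_actions)
    moreover have "(\<Sum>\<sigma>\<in>actions d. X) \<le> (\<Sum>\<sigma>\<in>actions d. expected_mismatches A \<sigma> i + expected_mismatches A (flip_sign i \<sigma>) i)"
      using expected_mismatches_pair[OF _ that valid] by (intro sum_mono) (simp add: X_def)
    ultimately show ?thesis
      by (simp add: sum.distrib)
  qed
  have "dim * (real (card (actions d)) * X / 2) = (\<Sum>i<d - 1. real (card (actions d)) * X / 2)"
    by (simp add: dim_def)
  also have "\<dots> \<le> (\<Sum>i<d - 1. \<Sum>\<sigma>\<in>actions d. expected_mismatches A \<sigma> i)"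
    using pair_sum by (intro sum_mono) fastforce
  also have "\<dots> = (\<Sum>\<sigma>\<in>actions d. \<Sum>i<d - 1. expected_mismatches A \<sigma> i)"
    by (rule sum.swap)
  also have "\<dots> < (\<Sum>\<sigma>\<in>actions d. dim * X / 2)"
    using finite_actions replicate_one_in_actions small by (intro sum_strict_mono) auto
  finally show False
    by simp
qed

section \<open>The regret lower bound\<close>

lemma g_\<kappa>_ge: "2/5 \<le> g * \<kappa>"
proof -
  have "1 \<le> exp b" "exp (- b) \<le> 1"
    using b_pos by simp_all
  then have "1 + c * exp b \<le> D * exp b" and "1 + c * exp (- b) \<le> D"
    using c_ge mult_left_mono[of "exp (- b)" 1 c] by (simp_all add: c_def algebra_simps)
  then have "(1 + c * exp b) * (1 + c * exp (- b)) \<le> D * exp b * D"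
    using c_ge D_ge by (intro mult_mono) (auto simp: add_pos_pos)
  then have \<kappa>_ge: "c * exp (- b) / (D * exp b * D) \<le> \<kappa>"
    unfolding \<kappa>_def using c_ge D_ge by (intro divide_left_mono) (auto simp: add_pos_pos)
  have "100/101 * (1 - 2 * b) \<le> c / D * exp (- 2 * b)"
    using c_ge D_ge exp_ge_add_one_self[of "- 2 * b"] b_small
    by (intro mult_mono) (auto simp: c_def field_simps)
  moreover have "2/5 * (2 + u) \<le> 100/101 * (1 - 2 * b)"
    using u_le b_small by simp
  ultimately have "2/5 * (2 + u) \<le> c / D * exp (- 2 * b)"
    by linarith
  then have "2/5 \<le> c / D * exp (- 2 * b) / (2 + u)"
    using u_pos by (subst pos_le_divide_eq) auto
  also have "\<dots> = g * (c * exp (- b) / (D * exp b * D))"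
  proof -
    have "D \<noteq> 0" "2 + u \<noteq> 0"
      using D_ge u_pos by auto
    moreover have "exp (- 2 * b) = exp (- b) / exp b"
      by (simp add: exp_minus field_simps flip: exp_add)
    ultimately show ?thesis
      by (simp add: g_def)
  qed
  also have "\<dots> \<le> g * \<kappa>"
    using \<kappa>_ge g_pos by (intro mult_left_mono) auto
  finally show ?thesis .
qed

lemma regret_constant_ge: "real d * sqrt (D * real T) / 2025 \<le> g * \<kappa> * b * (real T * \<pi>\<^sub>0 - real T * \<tau>)"
proof -
  have "9/20 \<le> \<pi>\<^sub>0"
    using u_le u_pos by (simp add: \<pi>\<^sub>0_def field_simps)
  then have "1/5 \<le> \<pi>\<^sub>0 - \<tau>"
    using \<tau>_le by linarith
  have "real d * sqrt (D * real T) / 2025 \<le> dim * sqrt (D * real T) / 29 / 25"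
    using real_d_eq dim_ge_1 D_ge T_pos by (simp add: field_simps)
  also have "\<dots> \<le> u * real T / 25"
    using u_T_ge by simp
  also have "\<dots> = 2/5 * (u / 2) * (real T * (1/5))"
    by simp
  also have "\<dots> \<le> g * \<kappa> * b * (real T * (\<pi>\<^sub>0 - \<tau>))"
    using g_\<kappa>_ge b_ge \<open>1/5 \<le> \<pi>\<^sub>0 - \<tau>\<close> u_pos T_pos
    by (intro mult_mono) (auto intro: mult_nonneg_nonneg)
  finally show ?thesis
    by (simp add: right_diff_distrib)
qed

lemma expected_regret_ge:
  assumes \<sigma>: "\<sigma> \<in> actions d" and valid: "valid_alg d A"
  defines "P \<equiv> trans d D T (theta_of \<sigma>)"
  assumes many_mismatches: "dim * (real T * \<pi>\<^sub>0 - real T * \<tau>) / 2 \<le> (\<Sum>i<d - 1. expected_mismatches A \<sigma> i)"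
  shows "real d * sqrt (D * real T) / 2025 \<le> expected_regret d P A T"
proof -
  have "real d * sqrt (D * real T) / 2025 \<le> g * \<kappa> * b * (real T * \<pi>\<^sub>0 - real T * \<tau>)"
    by (rule regret_constant_ge)
  also have "\<dots> = \<rho> * (dim * (real T * \<pi>\<^sub>0 - real T * \<tau>) / 2)"
    using \<epsilon>_dim by (simp add: \<rho>_def)
  also have "\<dots> \<le> \<rho> * (\<Sum>i<d - 1. expected_mismatches A \<sigma> i)"
    using many_mismatches g_pos \<kappa>_pos \<epsilon>_pos by (simp add: \<rho>_def)
  also have "\<dots> \<le> real T * J - expected_total_reward P A T"
    using expected_total_reward_le_mismatch_count[OF \<sigma> valid] by (simp add: P_def)
  also have "\<dots> \<le> expected_regret d P A T"
    using J_le_Jstar[OF \<sigma>] by (simp add: expected_regret_def P_def mult_left_mono)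
  finally show ?thesis .
qed

end

section \<open>Norms of the parameters and features\<close>

lemma vnorm_snoc: "vnorm (v @ [x]) = sqrt (sum_list (map (\<lambda>y. y\<^sup>2) v) + x\<^sup>2)"
  by (simp add: vnorm_def)

lemma vnorm_replicate_zero_snoc: "vnorm (replicate n 0 @ [x]) = \<bar>x\<bar>"
  by (simp add: vnorm_def sum_list_replicate)

lemma sum_list_map_signs:
  "set v \<subseteq> {-1, 1} \<Longrightarrow> sum_list (map (\<lambda>y. (k * y)\<^sup>2) v) = real (length v) * k\<^sup>2"
  by (induction v) (auto simp: power_mult_distrib algebra_simps)

context hard_instance
begin

lemma L_theta_theta_of_le:
  assumes \<sigma>: "\<sigma> \<in> actions d"
  shows "L_theta d D T (theta_of \<sigma>) \<le> 100 / 99"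
proof -
  have "sum_list (map (\<lambda>x. x\<^sup>2) (map (\<lambda>x. x / alpha d D T) (theta_of \<sigma>)))
      = sum_list (map (\<lambda>y. (\<epsilon> / alpha d D T * y)\<^sup>2) \<sigma>)"
    by (simp add: theta_of_def comp_def)
  also have "\<dots> = dim * (\<epsilon> / alpha d D T)\<^sup>2"
    using \<sigma> unfolding actions_def dim_def by (subst sum_list_map_signs) auto
  also have "\<dots> = (\<epsilon> * dim)\<^sup>2 * (1 + b) / b"
    using b_pos dim_ge_1 by (simp add: power_divide alpha_sq) (simp add: field_simps power2_eq_square)
  also have "\<dots> = b * (1 + b)"
    using \<epsilon>_dim b_pos by (simp add: power2_eq_square)
  finally have "L_theta d D T (theta_of \<sigma>) = sqrt (b * (1 + b) + (1 + b))"
    using beta_sq b_pos by (simp add: L_theta_def thetabar_def vnorm_snoc power_divide)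
  also have "\<dots> = sqrt ((1 + b)\<^sup>2)"
    by (simp add: power2_eq_square algebra_simps)
  also have "\<dots> = 1 + b"
    using b_pos by simp
  also have "\<dots> \<le> 100 / 99"
    using b_small by simp
  finally show ?thesis .
qed

lemma abs_beta_ln_c_le: "\<bar>beta d D T * ln c\<bar> \<le> ln c"
proof -
  have "beta d D T \<le> 1"
    using b_pos by (simp add: beta_eq)
  then show ?thesis
    using beta_pos c_ge by (simp add: abs_mult mult_left_le_one_le)
qed

lemma sum_sq_alpha_action:
  assumes "a \<in> actions d"
  shows "sum_list (map (\<lambda>x. x\<^sup>2) (map (\<lambda>x. - alpha d D T * x) a)) = b / (1 + b)"
proof -
  have "sum_list (map (\<lambda>x. x\<^sup>2) (map (\<lambda>x. - alpha d D T * x) a))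
      = sum_list (map (\<lambda>y. (alpha d D T * y)\<^sup>2) a)"
    by (simp add: comp_def)
  also have "\<dots> = dim * (alpha d D T)\<^sup>2"
    using assms unfolding actions_def dim_def by (subst sum_list_map_signs) auto
  also have "\<dots> = b / (1 + b)"
    using b_pos dim_ge_1 by (simp add: alpha_sq)
  finally show ?thesis .
qed

lemma vnorm_phi_le:
  assumes a: "a \<in> actions d"
  shows "vnorm (phi d D T s a s') \<le> 1 + ln c"
proof -
  have ln_c: "0 \<le> ln c"
    using c_ge by simp
  consider "s = 0" "s' = 0" | "s = 1" "s' = 1" | "\<not> (s = 0 \<and> s' = 0)" "\<not> (s = 1 \<and> s' = 1)"
    by blast
  then show ?thesis
  proof cases
    case 1
    have "b / (1 + b) \<le> 1"
      using b_pos by simp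
    moreover note sum_sq_alpha_action[OF a]
    moreover have "(beta d D T * ln c)\<^sup>2 \<le> (ln c)\<^sup>2"
      using abs_beta_ln_c_le by (metis abs_ge_zero power2_abs power_mono)
    ultimately have bound: "sum_list (map (\<lambda>x. x\<^sup>2) (map (\<lambda>x. - alpha d D T * x) a))
        + (beta d D T * ln c)\<^sup>2 \<le> (1 + ln c)\<^sup>2"
      using ln_c by (simp add: power2_eq_square algebra_simps)
    have "phi d D T s a s' = map (\<lambda>x. - alpha d D T * x) a @ [beta d D T * ln c]"
      using 1 by (simp add: phi_def ln_inverse_delta)
    then show ?thesis
      using real_le_lsqrt[OF _ bound] ln_c by (simp only: vnorm_snoc)
  next
    case 2
    then show ?thesis
      using abs_beta_ln_c_le by (simp add: phi_def ln_inverse_delta vnorm_replicate_zero_snoc)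
  next
    case 3
    then show ?thesis
      using ln_c by (auto simp: phi_def vnorm_replicate_zero_snoc)
  qed
qed

lemma L_phi_le: "L_phi d D T \<le> 1 + ln (D - 1)"
proof -
  have "{vnorm (phi d D T s a s') | s a s'. s \<in> states \<and> a \<in> actions d \<and> s' \<in> states}
      = (\<lambda>(s, a, s'). vnorm (phi d D T s a s')) ` (states \<times> actions d \<times> states)"
    by force
  moreover have "finite (states \<times> actions d \<times> states)"
    by (simp add: states_def finite_actions)
  moreover have "states \<times> actions d \<times> states \<noteq> {}"
    using replicate_one_in_actions by (auto simp: states_def)
  ultimately show ?thesis
    using vnorm_phi_le by (simp add: L_phi_def c_def)
qed

end

theorem theorem9:
  fixes d T :: nat and D :: real and A :: algorithm
  assumes "d \<ge> 2" and "D \<ge> 101" and "real T \<ge> 45 * real (d - 1) ^ 2 * D"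
    and "valid_alg d A"
  shows "\<exists>\<theta>\<in>Thetas d D T.
           L_theta d D T \<theta> \<le> 100 / 99 \<and>
           L_phi d D T \<le> 1 + ln (D - 1) \<and>
           expected_regret d (trans d D T \<theta>) A T \<ge> real d * sqrt (D * real T) / 2025"
proof -
  interpret hard_instance d D T
    using assms(1-3) by unfold_locales
  obtain \<sigma> where \<sigma>: "\<sigma> \<in> actions d"
    and many_mismatches: "dim * (real T * \<pi>\<^sub>0 - real T * \<tau>) / 2 \<le> (\<Sum>i<d - 1. expected_mismatches A \<sigma> i)"
    using exists_hard_sign_vector[OF assms(4)] by blast
  show ?thesis
    using theta_of_in_Thetas[OF \<sigma>] L_theta_theta_of_le[OF \<sigma>] L_phi_le
      expected_regret_ge[OF \<sigma> assms(4) many_mismatches]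
    by blast
qed

end
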